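(* Let $D\subset\mathbb R^m$ ($m\ge1$) be a domain, let $F_\epsilon:D\to\mathbb R^m$ be a smooth family of near-identity maps, and let $n\in\mathbb N$. Suppose a suspension $Y$ of $F_\epsilon$ can be written in the form $$Y(\tau,x,\epsilon)=A_n(x,\epsilon)+\epsilon^{2n}B_n(\tau,x,\epsilon),$$ where the $\mathcal C^{2n}$ norms of $A_n$ and $B_n$ are bounded uniformly with respect to $\epsilon$. Then for every compact $D_0\subset D$ there are constants $\epsilon_1>0$ and $C_n$ such that for all $0<|\epsilon|<\epsilon_1$, $$\sup_{x\in D_0}\bigl|A_n(x,\epsilon)-X_n(x,\epsilon)\bigr|\le C_n\epsilon^{2n},$$ where $X_n$ is the interpolating vector field of $F_\epsilon$.
   Context: A suspension of $F_\epsilon$ is a vector field $Y(\tau,x,\epsilon)$, $1$-periodic in $\tau$, such that the solution $\xi(\tau,x,\epsilon)$ of $\partial_\tau\xi=\epsilon Y(\tau,\xi,\epsilon)$, $\xi(0,x,\epsilon)=x$, satisfies $\xi(1,x,\epsilon)=F_\epsilon(x)$. For $\epsilon\neq0$ and $x$ whose iterates $x_k=F_\epsilon^k(x)$, $|k|\le n$, are defined (negative $k$ meaning iterates of the inverse), the interpolating vector field is $$X_n(x,\epsilon)=\epsilon^{-1}\sum_{k=1}^n p_{nk}\bigl(x_k-x_{-k}\bigr),\qquad p_{nk}=\frac{(-1)^{k+1}(n!)^2}{k(n+k)!(n-k)!}.$$ *)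

theory Defs
  imports "HOL-Analysis.Analysis"
begin

fun pderivs :: "'a list \<Rightarrow> ('a::real_normed_vector \<Rightarrow> 'b::real_normed_vector) \<Rightarrow> 'a \<Rightarrow> 'b" where
  "pderivs [] f = f"
| "pderivs (v # vs) f = (\<lambda>x. frechet_derivative (pderivs vs f) (at x) v)"

definition Ck_on :: "nat \<Rightarrow> 'a::euclidean_space set \<Rightarrow> ('a \<Rightarrow> 'b::real_normed_vector) \<Rightarrow> bool" where
  "Ck_on k S f \<longleftrightarrow>
     (\<forall>vs. set vs \<subseteq> Basis \<longrightarrow>
        (length vs < k \<longrightarrow> pderivs vs f differentiable_on S) \<and>
        (length vs \<le> k \<longrightarrow> continuous_on S (pderivs vs f)))"

definition smooth_on :: "'a::euclidean_space set \<Rightarrow> ('a \<Rightarrow> 'b::real_normed_vector) \<Rightarrow> bool" where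
  "smooth_on S f \<longleftrightarrow> (\<forall>k. Ck_on k S f)"

definition Ck_bounded :: "nat \<Rightarrow> 'a::euclidean_space set \<Rightarrow> ('a \<Rightarrow> 'b::real_normed_vector) \<Rightarrow> real \<Rightarrow> bool" where
  "Ck_bounded k S f M \<longleftrightarrow> Ck_on k S f \<and>
     (\<forall>vs. set vs \<subseteq> Basis \<longrightarrow> length vs \<le> k \<longrightarrow> (\<forall>x\<in>S. norm (pderivs vs f x) \<le> M))"

definition suspension :: "'a::euclidean_space set \<Rightarrow> (real \<Rightarrow> 'a \<Rightarrow> 'a) \<Rightarrow> (real \<Rightarrow> 'a \<Rightarrow> real \<Rightarrow> 'a) \<Rightarrow> real \<Rightarrow> bool" where
  "suspension D F Y \<epsilon> \<longleftrightarrow>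
     (\<forall>\<tau>. \<forall>x\<in>D. Y (\<tau> + 1) x \<epsilon> = Y \<tau> x \<epsilon>) \<and>
     (\<forall>x\<in>D. \<forall>\<xi>. \<xi> 0 = x \<and>
        (\<forall>t\<in>{0..1}. \<xi> t \<in> D \<and> (\<xi> has_vector_derivative (\<epsilon> *\<^sub>R Y t (\<xi> t) \<epsilon>)) (at t within {0..1}))
        \<longrightarrow> \<xi> 1 = F \<epsilon> x)"

definition pcoef :: "nat \<Rightarrow> nat \<Rightarrow> real" where
  "pcoef n k = (-1) ^ (k + 1) * (fact n)\<^sup>2 / (real k * fact (n + k) * fact (n - k))"

definition Finv :: "'a set \<Rightarrow> (real \<Rightarrow> 'a \<Rightarrow> 'a) \<Rightarrow> real \<Rightarrow> 'a \<Rightarrow> 'a" where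
  "Finv D F \<epsilon> = inv_into D (F \<epsilon>)"

text \<open>All iterates x_k, |k| \<le> n, are defined: x_0,...,x_{n-1} lie in D (so F can be applied),
  and x_0, x_{-1}, ..., x_{-(n-1)} lie in F_eps(D) (so the inverse can be applied).\<close>
definition iterates_defined :: "'a set \<Rightarrow> (real \<Rightarrow> 'a \<Rightarrow> 'a) \<Rightarrow> nat \<Rightarrow> real \<Rightarrow> 'a \<Rightarrow> bool" where
  "iterates_defined D F n \<epsilon> x \<longleftrightarrow>
     (\<forall>k<n. (F \<epsilon> ^^ k) x \<in> D \<and> (Finv D F \<epsilon> ^^ k) x \<in> F \<epsilon> ` D)"

definition interp_field :: "'a::real_vector set \<Rightarrow> (real \<Rightarrow> 'a \<Rightarrow> 'a) \<Rightarrow> nat \<Rightarrow> real \<Rightarrow> 'a \<Rightarrow> 'a" where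
  "interp_field D F n \<epsilon> x =
     (1 / \<epsilon>) *\<^sub>R (\<Sum>k=1..n. pcoef n k *\<^sub>R ((F \<epsilon> ^^ k) x - (Finv D F \<epsilon> ^^ k) x))"

end

theory Submission
  imports Defs
begin

text \<open>Fix \<epsilon> and x, let \<xi> be the solution of \<xi>' = \<epsilon> Y(\<tau>, \<xi>, \<epsilon>) and \<phi> that of the autonomous
  equation \<phi>' = \<epsilon> A(\<phi>, \<epsilon>), both starting at x. Periodicity of Y gives \<xi>(k) = x_k for
  |k| \<le> n, and since the two vector fields differ by O(\<epsilon>^(2n+1)), a Gronwall estimate gives
  |\<xi>(t) - \<phi>(t)| = O(\<epsilon>^(2n+1)) for |t| \<le> n + 1. The m-th Taylor coefficient of \<phi> at 0 is
  \<epsilon>^m (L_A^(m-1) A)(x) / m!, and the weights p_nk are exactly those with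
  \<Sum>_k p_nk (k^m - (-k)^m) = \<delta>_m1 for m \<le> 2n. Hence \<Sum>_k p_nk (\<phi>(k) - \<phi>(-k)) = \<epsilon> A(x) + O(\<epsilon>^(2n+1)),
  and dividing by \<epsilon> gives the estimate.\<close>

section \<open>Moments of the interpolation weights\<close>

lemma alternating_binomial_power_sum:
  "i < N \<Longrightarrow> (\<Sum>j\<le>N. (-1)^j * real (N choose j) * real j ^ i) = 0"
proof (induction N arbitrary: i)
  case 0 then show ?case by simp
next
  case (Suc N)
  show ?case
  proof (cases i)
    case 0
    then show ?thesis using choose_alternating_sum[of "Suc N", where 'a=real] by simp
  next
    case (Suc i')
    have "(\<Sum>j\<le>Suc N. (-1)^j * real (Suc N choose j) * real j ^ i)
        = (\<Sum>j\<le>N. (-1)^(Suc j) * real (Suc N choose Suc j) * real (Suc j) ^ i)"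
      by (subst sum.atMost_Suc_shift) (simp add: Suc)
    also have "\<dots> = - real (Suc N) * (\<Sum>j\<le>N. (-1)^j * real (N choose j) * real (Suc j) ^ i')"
    proof -
      have "real (Suc j) * real (Suc N choose Suc j) = real (Suc N) * real (N choose j)" for j
        using Suc_times_binomial[of j N] by (metis of_nat_mult)
      then have "(-1)^(Suc j) * real (Suc N choose Suc j) * real (Suc j) ^ i
          = - real (Suc N) * ((-1)^j * real (N choose j) * real (Suc j) ^ i')" for j
        by (simp only: Suc power_Suc) (simp del: binomial_Suc_Suc of_nat_Suc add: algebra_simps)
      then show ?thesis by (simp add: sum_distrib_left)
    qed
    also have "(\<Sum>j\<le>N. (-1)^j * real (N choose j) * real (Suc j) ^ i')
        = (\<Sum>l\<le>i'. real (i' choose l) * (\<Sum>j\<le>N. (-1)^j * real (N choose j) * real j ^ l))"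
    proof -
      have "real (Suc j) ^ i' = (\<Sum>l\<le>i'. real (i' choose l) * real j ^ l)" for j
        using binomial_ring[of "real j" 1 i'] by (simp add: add.commute)
      then show ?thesis
        by (simp add: sum_distrib_left algebra_simps sum.swap[where A="{..N}"])
    qed
    also have "\<dots> = 0"
      using Suc.prems \<open>i = Suc i'\<close> by (intro sum.neutral ballI) (simp add: Suc.IH)
    finally show ?thesis by simp
  qed
qed

lemma alternating_binomial_shifted_power_sum:
  assumes "e < N"
  shows "(\<Sum>j\<le>N. (-1)^j * real (N choose j) * (real j - c) ^ e) = 0"
proof -
  have "(real j - c) ^ e = (\<Sum>l\<le>e. real (e choose l) * real j ^ l * (-c) ^ (e - l))" for j
    using binomial_ring[of "real j" "-c" e] by simp
  then have "(\<Sum>j\<le>N. (-1)^j * real (N choose j) * (real j - c) ^ e)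
      = (\<Sum>l\<le>e. (real (e choose l) * (-c)^(e-l)) * (\<Sum>j\<le>N. (-1)^j * real (N choose j) * real j ^ l))"
    by (simp add: sum_distrib_left algebra_simps sum.swap[where A="{..N}"])
  also have "\<dots> = 0"
    using assms by (intro sum.neutral ballI) (simp add: alternating_binomial_power_sum)
  finally show ?thesis .
qed

lemma sum_atMost_double_split:
  fixes f :: "nat \<Rightarrow> 'a::comm_monoid_add"
  shows "(\<Sum>j\<le>2*n. f j) = f n + (\<Sum>k=1..n. f (n + k) + f (n - k))"
proof -
  have "(\<Sum>j\<le>2*n. f j) = sum f ({..<n} \<union> {n..2*n})"
    by (rule sum.cong) auto
  also have "\<dots> = (\<Sum>j<n. f j) + (\<Sum>j=n..2*n. f j)"
    by (rule sum.union_disjoint) auto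
  also have "(\<Sum>j<n. f j) = (\<Sum>k=1..n. f (n - k))"
    by (rule sum.reindex_bij_witness[where i="\<lambda>j. n - j" and j="\<lambda>k. n - k"]) auto
  also have "(\<Sum>j=n..2*n. f j) = f n + (\<Sum>k=1..n. f (n + k))"
    by (simp add: sum.atLeast_Suc_atMost sum.shift_bounds_cl_nat_ivl[where k=n, symmetric]
        mult_2 add.commute)
  finally show ?thesis by (simp add: sum.distrib ac_simps)
qed


lemma alternating_central_binomial_even_power_sum:
  assumes "even e" "e < 2*n"
  shows "(\<Sum>k=1..n. (-1)^k * real ((2*n) choose (n+k)) * real k ^ e)
    = - real ((2*n) choose n) * 0^e / 2"
proof -
  define f where "f j = (-1)^j * real ((2*n) choose j) * (real j - real n) ^ e" for j
  define S where "S = (\<Sum>k=1..n. (-1)^k * real ((2*n) choose (n+k)) * real k ^ e)"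
  have fk: "f (n + k) + f (n - k) = (-1)^n * (2 * ((-1)^k * real ((2*n) choose (n+k)) * real k ^ e))"
    if "k \<in> {1..n}" for k
  proof -
    have "(2*n) choose (n-k) = (2*n) choose (n+k)"
      using binomial_symmetric[of "n-k" "2*n"] that by (simp add: diff_diff_right)
    moreover have "(-1::real)^(n-k) = (-1)^(n+k)"
    proof -
      have "n + k = (n - k) + 2*k" using that by simp
      then show ?thesis by (simp only: power_add power_mult) simp
    qed
    moreover have "(real (n - k) - real n) ^ e = real k ^ e"
      using that assms(1) by (simp add: of_nat_diff power_minus_even)
    ultimately show ?thesis unfolding f_def by (simp add: power_add)
  qed
  have "0 = (\<Sum>j\<le>2*n. f j)"
    unfolding f_def using assms(2) by (simp add: alternating_binomial_shifted_power_sum)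
  also have "\<dots> = f n + (\<Sum>k=1..n. f (n + k) + f (n - k))"
    by (rule sum_atMost_double_split)
  also have "(\<Sum>k=1..n. f (n + k) + f (n - k)) = (-1)^n * (2 * S)"
    unfolding S_def sum_distrib_left by (rule sum.cong[OF refl fk])
  also have "f n = (-1)^n * real ((2*n) choose n) * 0^e"
    by (simp add: f_def)
  finally have "(-1)^n * (real ((2*n) choose n) * 0^e + 2 * S) = 0"
    by (simp add: distrib_left)
  then show ?thesis unfolding S_def[symmetric] by simp
qed

lemma pcoef_times_index:
  assumes "k \<in> {1..n}"
  shows "pcoef n k * real k = - ((fact n)^2 / fact (2*n)) * ((-1)^k * real ((2*n) choose (n+k)))"
proof -
  have "real ((2*n) choose (n+k)) = fact (2*n) / (fact (n+k) * fact (n - k))"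
    using assms by (subst binomial_fact) (auto simp: mult_2)
  then show ?thesis
    using assms unfolding pcoef_def by (simp add: field_simps)
qed

lemma pcoef_odd_moment:
  assumes "odd m" "m < 2*n"
  shows "(\<Sum>k=1..n. pcoef n k * real k ^ m) = (if m = 1 then 1/2 else 0)"
proof -
  obtain e where e: "m = Suc e" "even e"
    using assms(1) by (metis odd_Suc_minus_one odd_pos Suc_pred even_Suc)
  have central: "real ((2*n) choose n) = fact (2*n) / (fact n)^2"
    by (subst binomial_fact) (auto simp: mult_2 power2_eq_square)
  have "(\<Sum>k=1..n. pcoef n k * real k ^ m) = (\<Sum>k=1..n. (pcoef n k * real k) * real k ^ e)"
    using e(1) by (simp add: mult.assoc)
  also have "\<dots> = - ((fact n)^2 / fact (2*n))
      * (\<Sum>k=1..n. (-1)^k * real ((2*n) choose (n+k)) * real k ^ e)"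
    by (simp add: pcoef_times_index sum_distrib_left mult.assoc)
  also have "\<dots> = - ((fact n)^2 / fact (2*n)) * (- real ((2*n) choose n) * 0^e / 2)"
    using assms e by (subst alternating_central_binomial_even_power_sum) auto
  also have "\<dots> = 0^e / 2"
    by (simp add: central)
  finally show ?thesis using e(1) by (cases e) auto
qed

lemma pcoef_moment:
  assumes "m \<le> 2*n"
  shows "(\<Sum>k=1..n. pcoef n k * (real k ^ m - (- real k) ^ m)) = (if m = 1 then 1 else 0)"
proof (cases "even m")
  case True
  then show ?thesis by auto
next
  case False
  then have "m < 2*n" using assms by presburger
  have "(\<Sum>k=1..n. pcoef n k * (real k ^ m - (- real k) ^ m)) = 2 * (\<Sum>k=1..n. pcoef n k * real k ^ m)"
    using False by (simp add: power_minus_odd sum_distrib_left mult_ac)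
  then show ?thesis using pcoef_odd_moment[OF False \<open>m < 2*n\<close>] by simp
qed

section \<open>Functions with bounded partial derivatives\<close>

definition dir_deriv :: "('a::real_normed_vector \<Rightarrow> 'b::real_normed_vector) \<Rightarrow> 'a \<Rightarrow> 'a \<Rightarrow> 'b" where
  "dir_deriv f v = (\<lambda>y. frechet_derivative f (at y) v)"

fun bounded_derivs :: "nat \<Rightarrow> 'a::euclidean_space set \<Rightarrow> real \<Rightarrow> ('a \<Rightarrow> 'b::real_normed_vector) \<Rightarrow> bool" where
  "bounded_derivs 0 U C f \<longleftrightarrow> (\<forall>y\<in>U. norm (f y) \<le> C)"
| "bounded_derivs (Suc m) U C f \<longleftrightarrow> (\<forall>y\<in>U. norm (f y) \<le> C) \<and> f differentiable_on U \<and>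
      (\<forall>b\<in>Basis. bounded_derivs m U C (dir_deriv f b))"

lemma bounded_derivs_norm_le: "bounded_derivs m U C f \<Longrightarrow> y \<in> U \<Longrightarrow> norm (f y) \<le> C"
  by (cases m) auto

lemma bounded_derivs_mono: "bounded_derivs m U C f \<Longrightarrow> C \<le> C' \<Longrightarrow> bounded_derivs m U C' f"
  by (induction m arbitrary: f) (auto intro: order_trans)

lemma bounded_derivs_order_mono: "bounded_derivs m U C f \<Longrightarrow> k \<le> m \<Longrightarrow> bounded_derivs k U C f"
proof (induction m arbitrary: f k)
  case (Suc m)
  then show ?case by (cases k) auto
qed simp

lemma bounded_derivs_differentiable_at:
  "open U \<Longrightarrow> bounded_derivs (Suc m) U C f \<Longrightarrow> y \<in> U \<Longrightarrow> f differentiable at y"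
  by (auto simp: differentiable_on_eq_differentiable_at)

lemma bounded_derivs_cong:
  assumes "open U" "\<And>y. y \<in> U \<Longrightarrow> f y = g y" "bounded_derivs m U C f"
  shows "bounded_derivs m U C g"
  using assms(2,3)
proof (induction m arbitrary: f g)
  case (Suc m)
  have diff: "f differentiable at y" if "y \<in> U" for y
    using bounded_derivs_differentiable_at[OF assms(1) Suc.prems(2) that] .
  have "g differentiable_on U"
    using diff Suc.prems(1) has_derivative_transform_within_open[OF _ assms(1)]
    by (metis differentiable_at_imp_differentiable_on differentiable_def)
  moreover have "dir_deriv f b y = dir_deriv g b y" if "y \<in> U" for b y
    using frechet_derivative_transform_within_open[OF diff[OF that] assms(1) that] Suc.prems(1)
    by (simp add: dir_deriv_def)
  ultimately show ?case
    using Suc.IH[of "dir_deriv f b" "dir_deriv g b" for b] Suc.prems by auto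
qed auto

lemma dir_deriv_add:
  assumes "f differentiable at y" "g differentiable at y"
  shows "dir_deriv (\<lambda>y. f y + g y) b y = dir_deriv f b y + dir_deriv g b y"
proof -
  have "((\<lambda>y. f y + g y) has_derivative (\<lambda>v. frechet_derivative f (at y) v + frechet_derivative g (at y) v)) (at y)"
    using assms by (intro has_derivative_add) (simp_all add: frechet_derivative_works[symmetric])
  then show ?thesis unfolding dir_deriv_def by (metis frechet_derivative_at)
qed

lemma dir_deriv_scaleR:
  fixes f :: "'a::real_normed_vector \<Rightarrow> real"
  assumes "f differentiable at y" "g differentiable at y"
  shows "dir_deriv (\<lambda>y. f y *\<^sub>R g y) b y = dir_deriv f b y *\<^sub>R g y + f y *\<^sub>R dir_deriv g b y"
proof -
  have "((\<lambda>y. f y *\<^sub>R g y) has_derivative (\<lambda>v. f y *\<^sub>R frechet_derivative g (at y) v + frechet_derivative f (at y) v *\<^sub>R g y)) (at y)"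
    using assms by (intro has_derivative_scaleR) (simp_all add: frechet_derivative_works[symmetric])
  then show ?thesis unfolding dir_deriv_def by (metis frechet_derivative_at add.commute)
qed

lemma dir_deriv_inner_left:
  assumes "f differentiable at y"
  shows "dir_deriv (\<lambda>y. f y \<bullet> c) b y = dir_deriv f b y \<bullet> c"
proof -
  have "((\<lambda>y. f y \<bullet> c) has_derivative (\<lambda>v. frechet_derivative f (at y) v \<bullet> c)) (at y)"
    using assms by (intro has_derivative_inner_left) (simp_all add: frechet_derivative_works[symmetric])
  then show ?thesis unfolding dir_deriv_def by (metis frechet_derivative_at)
qed

lemma bounded_derivs_zero: "0 \<le> C \<Longrightarrow> bounded_derivs m U C (\<lambda>y. 0)"
  by (induction m) (simp_all add: dir_deriv_def)

lemma bounded_derivs_add: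
  assumes "open U" "bounded_derivs m U C1 f" "bounded_derivs m U C2 g"
  shows "bounded_derivs m U (C1 + C2) (\<lambda>y. f y + g y)"
  using assms(2,3)
proof (induction m arbitrary: f g)
  case 0 then show ?case by (auto intro: norm_triangle_le add_mono)
next
  case (Suc m)
  have "bounded_derivs m U (C1 + C2) (dir_deriv (\<lambda>y. f y + g y) b)" if "b \<in> Basis" for b
  proof (rule bounded_derivs_cong[OF assms(1)])
    show "bounded_derivs m U (C1 + C2) (\<lambda>y. dir_deriv f b y + dir_deriv g b y)"
      using Suc that by auto
    show "dir_deriv f b y + dir_deriv g b y = dir_deriv (\<lambda>y. f y + g y) b y" if "y \<in> U" for y
      using dir_deriv_add bounded_derivs_differentiable_at[OF assms(1)] Suc.prems that by metis
  qed
  moreover have "norm (f y + g y) \<le> C1 + C2" if "y \<in> U" for y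
    using Suc.prems that by (meson add_mono bounded_derivs_norm_le norm_triangle_le)
  ultimately show ?case
    using Suc.prems by (auto intro: differentiable_on_add)
qed

lemma bounded_derivs_sum:
  assumes "open U" "finite S" "\<And>i. i \<in> S \<Longrightarrow> bounded_derivs m U (C i) (f i)" "\<And>i. i \<in> S \<Longrightarrow> 0 \<le> C i"
  shows "bounded_derivs m U (\<Sum>i\<in>S. C i) (\<lambda>y. \<Sum>i\<in>S. f i y)"
  using assms(2-4)
  by (induction S rule: finite_induct) (simp_all add: bounded_derivs_zero bounded_derivs_add[OF assms(1)])

lemma bounded_derivs_scaleR:
  fixes f :: "'a::euclidean_space \<Rightarrow> real"
  assumes "open U" "bounded_derivs m U C1 f" "bounded_derivs m U C2 g" "0 \<le> C1" "0 \<le> C2"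
  shows "bounded_derivs m U (2^m * C1 * C2) (\<lambda>y. f y *\<^sub>R g y)"
  using assms(2,3)
proof (induction m arbitrary: f g)
  case 0 then show ?case by (auto intro!: mult_mono simp: assms)
next
  case (Suc m)
  have "norm (f y *\<^sub>R g y) \<le> 2^Suc m * C1 * C2" if "y \<in> U" for y
  proof -
    have "norm (f y *\<^sub>R g y) \<le> 1 * (C1 * C2)"
      using Suc.prems that by (auto intro!: mult_mono simp: assms)
    also have "\<dots> \<le> 2^Suc m * (C1 * C2)"
      using assms(4,5) one_le_power[of "2::real" "Suc m"] by (intro mult_right_mono) simp_all
    finally show ?thesis by (simp add: mult.assoc)
  qed
  moreover have "bounded_derivs m U (2^Suc m * C1 * C2) (dir_deriv (\<lambda>y. f y *\<^sub>R g y) b)"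
    if "b \<in> Basis" for b
  proof (rule bounded_derivs_cong[OF assms(1)])
    have "bounded_derivs m U (2^m * C1 * C2) (\<lambda>y. dir_deriv f b y *\<^sub>R g y)"
      using Suc.IH[of "dir_deriv f b" g] Suc.prems that bounded_derivs_order_mono[of "Suc m" U C2 g m] by auto
    moreover have "bounded_derivs m U (2^m * C1 * C2) (\<lambda>y. f y *\<^sub>R dir_deriv g b y)"
      using Suc.IH[of f "dir_deriv g b"] Suc.prems that bounded_derivs_order_mono[of "Suc m" U C1 f m] by auto
    ultimately show "bounded_derivs m U (2^Suc m * C1 * C2) (\<lambda>y. dir_deriv f b y *\<^sub>R g y + f y *\<^sub>R dir_deriv g b y)"
      using bounded_derivs_add[OF assms(1)] by (fastforce simp: mult_ac)
    show "dir_deriv f b y *\<^sub>R g y + f y *\<^sub>R dir_deriv g b y = dir_deriv (\<lambda>y. f y *\<^sub>R g y) b y"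
      if "y \<in> U" for y
      using dir_deriv_scaleR bounded_derivs_differentiable_at[OF assms(1)] Suc.prems that by metis
  qed
  ultimately show ?case
    using Suc.prems by (auto intro: differentiable_on_scaleR)
qed

lemma bounded_derivs_inner_Basis:
  assumes "open U" "bounded_derivs m U C f" "c \<in> Basis"
  shows "bounded_derivs m U C (\<lambda>y. f y \<bullet> c)"
  using assms(2)
proof (induction m arbitrary: f)
  case 0 then show ?case using assms(3) by (auto intro: order_trans[OF Basis_le_norm])
next
  case (Suc m)
  have "bounded_derivs m U C (dir_deriv (\<lambda>y. f y \<bullet> c) b)" if "b \<in> Basis" for b
  proof (rule bounded_derivs_cong[OF assms(1)])
    show "bounded_derivs m U C (\<lambda>y. dir_deriv f b y \<bullet> c)" using Suc that by auto
    show "dir_deriv f b y \<bullet> c = dir_deriv (\<lambda>y. f y \<bullet> c) b y" if "y \<in> U" for y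
      using dir_deriv_inner_left bounded_derivs_differentiable_at[OF assms(1)] Suc.prems that by metis
  qed
  moreover have "(\<lambda>y. f y \<bullet> c) differentiable_on U"
    using Suc.prems by (auto intro!: differentiable_at_imp_differentiable_on
        simp: differentiable_on_eq_differentiable_at[OF assms(1)])
  ultimately show ?case
    using Suc.prems assms(3) by (auto intro: order_trans[OF Basis_le_norm])
qed

lemma pderivs_append_single: "pderivs (vs @ [b]) f = pderivs vs (dir_deriv f b)"
  by (induction vs) (auto simp: dir_deriv_def)

lemma bounded_derivs_if_pderivs_bounded:
  assumes "\<And>vs. set vs \<subseteq> Basis \<Longrightarrow> length vs \<le> m \<Longrightarrow>
      (\<forall>y\<in>U. norm (pderivs vs f y) \<le> M) \<and> (length vs < m \<longrightarrow> pderivs vs f differentiable_on U)"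
  shows "bounded_derivs m U M f"
  using assms
proof (induction m arbitrary: f)
  case 0
  then show ?case using 0[of "[]"] by simp
next
  case (Suc m)
  have "bounded_derivs m U M (dir_deriv f b)" if b: "b \<in> Basis" for b
    using Suc.IH[of "dir_deriv f b"] Suc.prems[of "_ @ [b]"] b by (simp add: pderivs_append_single)
  then show ?case using Suc.prems[of "[]"] by simp
qed

lemma bounded_derivs_if_Ck_bounded:
  assumes "Ck_bounded m D f M" "U \<subseteq> D"
  shows "bounded_derivs m U M f"
  using assms unfolding Ck_bounded_def Ck_on_def
  by (intro bounded_derivs_if_pderivs_bounded) (auto intro: differentiable_on_subset)

lemma Ck_bounded_norm_le: "Ck_bounded m D f M \<Longrightarrow> y \<in> D \<Longrightarrow> norm (f y) \<le> M"
  using bounded_derivs_if_Ck_bounded[of m D f M "{y}"] bounded_derivs_norm_le by blast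

lemma frechet_derivative_Basis_expansion:
  fixes f :: "'a::euclidean_space \<Rightarrow> 'b::real_normed_vector"
  assumes "f differentiable at y"
  shows "frechet_derivative f (at y) v = (\<Sum>b\<in>Basis. (v \<bullet> b) *\<^sub>R dir_deriv f b y)"
proof -
  have "frechet_derivative f (at y) v = frechet_derivative f (at y) (\<Sum>b\<in>Basis. (v \<bullet> b) *\<^sub>R b)"
    by (simp add: euclidean_representation)
  also have "\<dots> = (\<Sum>b\<in>Basis. (v \<bullet> b) *\<^sub>R frechet_derivative f (at y) b)"
    using linear_frechet_derivative[OF assms] by (simp add: linear_sum linear_scale)
  finally show ?thesis by (simp add: dir_deriv_def)
qed

lemma norm_frechet_derivative_le:
  fixes f :: "'a::euclidean_space \<Rightarrow> 'b::real_normed_vector"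
  assumes "f differentiable at p" "\<And>b. b \<in> Basis \<Longrightarrow> norm (dir_deriv f b p) \<le> M"
  shows "norm (frechet_derivative f (at p) v) \<le> real DIM('a) * M * norm v"
proof -
  have "norm (frechet_derivative f (at p) v) \<le> (\<Sum>b\<in>(Basis::'a set). norm ((v \<bullet> b) *\<^sub>R dir_deriv f b p))"
    unfolding frechet_derivative_Basis_expansion[OF assms(1)] by (rule norm_sum)
  also have "\<dots> \<le> (\<Sum>b\<in>(Basis::'a set). norm v * M)"
    using assms(2) Basis_le_norm by (intro sum_mono) (auto intro!: mult_mono)
  finally show ?thesis by (simp add: mult_ac)
qed

lemma bounded_derivs_lipschitz:
  fixes f :: "'a::euclidean_space \<Rightarrow> 'b::real_normed_vector"
  assumes "open U" "convex S" "S \<subseteq> U" "bounded_derivs (Suc k) U M f" "y \<in> S" "z \<in> S"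
  shows "norm (f y - f z) \<le> real DIM('a) * M * norm (y - z)"
proof (rule differentiable_bound[OF assms(2) _ _ assms(5,6)])
  fix p assume "p \<in> S"
  then have p: "p \<in> U" using assms(3) by auto
  have d: "f differentiable at p"
    using bounded_derivs_differentiable_at[OF assms(1,4) p] .
  then show "(f has_derivative frechet_derivative f (at p)) (at p within S)"
    by (simp add: frechet_derivative_works has_derivative_at_withinI)
  show "onorm (frechet_derivative f (at p)) \<le> real DIM('a) * M"
    using assms(4) p by (intro onorm_le norm_frechet_derivative_le[OF d])
      (auto intro: bounded_derivs_norm_le)
qed

lemma Ck_bounded_continuous_on: "Ck_bounded m S f M \<Longrightarrow> continuous_on S f"
  unfolding Ck_bounded_def Ck_on_def by (metis empty_subsetI list.size(3) pderivs.simps(1) set_empty zero_le)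

lemma Ck_bounded_lipschitz_snd:
  fixes g :: "real \<times> 'a::euclidean_space \<Rightarrow> 'b::real_normed_vector"
  assumes "open D" "convex S" "S \<subseteq> D" "1 \<le> m" "Ck_bounded m (UNIV \<times> D) g M" "y \<in> S" "z \<in> S"
  shows "norm (g (t, y) - g (t, z)) \<le> real DIM(real \<times> 'a) * M * norm (y - z)"
proof -
  have "bounded_derivs (Suc (m - 1)) (UNIV \<times> D) M g"
    using bounded_derivs_if_Ck_bounded[OF assms(5) order_refl] assms(4) by simp
  then have "norm (g (t, y) - g (t, z)) \<le> real DIM(real \<times> 'a) * M * norm ((t, y) - (t, z))"
    using assms
    by (intro bounded_derivs_lipschitz[where U="UNIV \<times> D" and S="{t} \<times> S" and k="m - 1"])
      (auto simp: open_Times convex_Times)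
  then show ?thesis by (simp add: norm_Pair)
qed

section \<open>Taylor expansion of a flow\<close>

text \<open>flow_deriv A j is the Lie derivative L_A^j A: along a solution of \<phi>' = \<epsilon> A(\<phi>),
  the (j+1)-st derivative of \<phi> is \<epsilon>^(j+1) flow_deriv A j (\<phi> t).\<close>

fun flow_deriv :: "('a::euclidean_space \<Rightarrow> 'a) \<Rightarrow> nat \<Rightarrow> 'a \<Rightarrow> 'a" where
  "flow_deriv A 0 = A"
| "flow_deriv A (Suc j) = (\<lambda>y. \<Sum>b\<in>Basis. (A y \<bullet> b) *\<^sub>R dir_deriv (flow_deriv A j) b y)"

lemma bounded_derivs_flow_deriv:
  fixes A :: "'a::euclidean_space \<Rightarrow> 'a"
  assumes U: "open U" and A: "bounded_derivs N U M A" and M: "0 \<le> M" and j: "j \<le> N"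
  shows "bounded_derivs (N - j) U ((real DIM('a) * 2^N * M)^j * M) (flow_deriv A j)"
  using j
proof (induction j)
  case 0 then show ?case using A by simp
next
  case (Suc j)
  define c where "c = real DIM('a) * 2^N * M"
  define K where "K = c^j * M"
  have c0: "0 \<le> c" "0 \<le> K" unfolding c_def K_def using M by auto
  have IH: "bounded_derivs (Suc (N - Suc j)) U K (flow_deriv A j)"
    using Suc unfolding K_def c_def by (simp add: Suc_diff_Suc)
  have "bounded_derivs (N - Suc j) U (2^(N - Suc j) * M * K) (\<lambda>y. (A y \<bullet> b) *\<^sub>R dir_deriv (flow_deriv A j) b y)"
    if b: "b \<in> Basis" for b
    using bounded_derivs_inner_Basis[OF U bounded_derivs_order_mono[OF A] b] IH b
    by (intro bounded_derivs_scaleR[OF U _ _ M c0(2)]) auto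
  then have "bounded_derivs (N - Suc j) U (\<Sum>b\<in>(Basis::'a set). 2^(N - Suc j) * M * K) (flow_deriv A (Suc j))"
    by (simp only: flow_deriv.simps) (rule bounded_derivs_sum[OF U finite_Basis], auto simp: M c0)
  moreover have "(\<Sum>b\<in>(Basis::'a set). 2^(N - Suc j) * M * K) \<le> c^(Suc j) * M"
  proof -
    have "(\<Sum>b\<in>(Basis::'a set). 2^(N - Suc j) * M * K) \<le> real DIM('a) * 2^N * M * K"
      using M c0 by (simp, intro mult_right_mono mult_left_mono power_increasing) auto
    also have "\<dots> = c^(Suc j) * M" unfolding c_def K_def by (simp add: mult_ac)
    finally show ?thesis .
  qed
  ultimately show ?case unfolding c_def by (rule bounded_derivs_mono)
qed

lemma has_vector_derivative_flow_deriv: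
  fixes A :: "'a::euclidean_space \<Rightarrow> 'a"
  assumes "open U" "bounded_derivs (Suc k) U C (flow_deriv A i)"
    and "(\<phi> has_vector_derivative \<epsilon> *\<^sub>R A (\<phi> t)) (at t)" "\<phi> t \<in> U"
  shows "((\<lambda>t. flow_deriv A i (\<phi> t)) has_vector_derivative \<epsilon> *\<^sub>R flow_deriv A (Suc i) (\<phi> t)) (at t)"
proof -
  let ?v = "\<epsilon> *\<^sub>R A (\<phi> t)"
  let ?D = "frechet_derivative (flow_deriv A i) (at (\<phi> t))"
  have d: "flow_deriv A i differentiable at (\<phi> t)"
    using bounded_derivs_differentiable_at[OF assms(1,2,4)] .
  have "((\<lambda>t. flow_deriv A i (\<phi> t)) has_derivative (\<lambda>h. ?D (h *\<^sub>R ?v))) (at t)"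
    using has_derivative_compose[of \<phi> "\<lambda>h. h *\<^sub>R ?v" t UNIV "flow_deriv A i" ?D] assms(3) d
    by (simp add: has_vector_derivative_def frechet_derivative_works)
  moreover have "?D (h *\<^sub>R ?v) = h *\<^sub>R ?D ?v" for h
    using linear_frechet_derivative[OF d] by (simp add: linear_scale)
  moreover have "?D ?v = \<epsilon> *\<^sub>R flow_deriv A (Suc i) (\<phi> t)"
    by (simp add: frechet_derivative_Basis_expansion[OF d] scaleR_sum_right)
  ultimately show ?thesis by (simp add: has_vector_derivative_def)
qed

lemma has_real_derivative_inner_left:
  assumes "(f has_vector_derivative v) F"
  shows "((\<lambda>t. f t \<bullet> b) has_real_derivative (v \<bullet> b)) F"
proof -
  have "((\<lambda>t. f t \<bullet> b) has_derivative (\<lambda>h. (h *\<^sub>R v) \<bullet> b)) F"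
    using assms unfolding has_vector_derivative_def by (intro has_derivative_inner_left)
  moreover have "(\<lambda>h. (h *\<^sub>R v) \<bullet> b) = (*) (v \<bullet> b)"
    by (auto simp: mult.commute)
  ultimately show ?thesis by (simp add: has_field_derivative_def)
qed

lemma flow_taylor_component:
  fixes A :: "'a::euclidean_space \<Rightarrow> 'a" and \<phi> :: "real \<Rightarrow> 'a"
  assumes U: "open U" and A: "bounded_derivs N U M A" and M: "0 \<le> M"
    and phi: "\<And>t. \<bar>t\<bar> \<le> R \<Longrightarrow> \<phi> t \<in> U \<and> (\<phi> has_vector_derivative \<epsilon> *\<^sub>R A (\<phi> t)) (at t)"
    and b: "b \<in> Basis" and s: "\<bar>s\<bar> \<le> R"
  shows "\<bar>\<phi> s \<bullet> b - (\<phi> 0 \<bullet> b + (\<Sum>m<N. \<epsilon>^Suc m * (flow_deriv A m (\<phi> 0) \<bullet> b) / fact (Suc m) * s^Suc m))\<bar>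
    \<le> \<bar>\<epsilon>\<bar>^Suc N * ((real DIM('a) * 2^N * M)^N * M) * \<bar>s\<bar>^Suc N / fact (Suc N)"
proof -
  define K where "K = (real DIM('a) * 2^N * M)^N * M"
  define c where "c m t = (if m = 0 then \<phi> t \<bullet> b else \<epsilon>^m * (flow_deriv A (m - 1) (\<phi> t) \<bullet> b))" for m t
  have "DERIV (c m) t :> c (Suc m) t" if "m < Suc N" "\<bar>t\<bar> \<le> \<bar>s\<bar>" for m t
  proof (cases m)
    case 0
    have "c 0 = (\<lambda>t. \<phi> t \<bullet> b)"
      by (simp add: c_def fun_eq_iff)
    then show ?thesis
      using 0 has_real_derivative_inner_left[of \<phi> "\<epsilon> *\<^sub>R A (\<phi> t)" "at t" b] phi[of t] that s
      by (simp add: c_def)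
  next
    case (Suc i)
    have "bounded_derivs (Suc (N - Suc i)) U ((real DIM('a) * 2^N * M)^i * M) (flow_deriv A i)"
      using bounded_derivs_flow_deriv[OF U A M, of i] that Suc by (simp add: Suc_diff_Suc)
    then have "((\<lambda>t. flow_deriv A i (\<phi> t) \<bullet> b) has_real_derivative (\<epsilon> * (flow_deriv A (Suc i) (\<phi> t) \<bullet> b))) (at t)"
      using has_vector_derivative_flow_deriv[OF U] has_real_derivative_inner_left phi that s
      by (metis inner_scaleR_left order_trans)
    then have "((\<lambda>t. \<epsilon>^m * (flow_deriv A i (\<phi> t) \<bullet> b)) has_real_derivative
        \<epsilon>^m * (\<epsilon> * (flow_deriv A (Suc i) (\<phi> t) \<bullet> b))) (at t)"
      by (rule DERIV_cmult)
    moreover have "c m = (\<lambda>t. \<epsilon>^m * (flow_deriv A i (\<phi> t) \<bullet> b))"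
      using Suc by (simp add: c_def fun_eq_iff)
    ultimately show ?thesis
      using Suc by (simp add: c_def mult_ac del: flow_deriv.simps)
  qed
  then obtain t where t: "\<bar>t\<bar> \<le> \<bar>s\<bar>"
    "c 0 s = (\<Sum>m<Suc N. c m 0 / fact m * s ^ m) + c (Suc N) t / fact (Suc N) * s ^ Suc N"
    using Maclaurin_bi_le[of c "c 0" "Suc N" s] by blast
  have "norm (flow_deriv A N (\<phi> t)) \<le> K"
    using bounded_derivs_norm_le[OF bounded_derivs_flow_deriv[OF U A M order_refl]] phi t s
    unfolding K_def by force
  then have "\<bar>c (Suc N) t\<bar> \<le> \<bar>\<epsilon>\<bar>^Suc N * K"
    using order_trans[OF Basis_le_norm[OF b]] unfolding c_def
    by (simp add: abs_mult power_abs mult_left_mono del: power_Suc)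
  moreover have "(\<Sum>m<Suc N. c m 0 / fact m * s ^ m)
      = \<phi> 0 \<bullet> b + (\<Sum>m<N. \<epsilon>^Suc m * (flow_deriv A m (\<phi> 0) \<bullet> b) / fact (Suc m) * s^Suc m)"
    unfolding sum.lessThan_Suc_shift by (simp add: c_def del: power_Suc fact_Suc)
  ultimately show ?thesis
    using t unfolding K_def c_def
    by (simp add: abs_mult power_abs divide_right_mono mult_right_mono del: power_Suc fact_Suc)
qed

definition taylor_const :: "nat \<Rightarrow> nat \<Rightarrow> real \<Rightarrow> real" where
  "taylor_const d n M = (real d * 2^(2*n) * M)^(2*n) * M
     * (\<Sum>k=1..n. \<bar>pcoef n k\<bar> * 2 * real k^(2*n+1)) / fact (2*n+1)"

lemma flow_interpolation_component:
  fixes A :: "'a::euclidean_space \<Rightarrow> 'a" and \<phi> :: "real \<Rightarrow> 'a"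
  assumes U: "open U" and n: "1 \<le> n" and A: "bounded_derivs (2*n) U M A" and M: "0 \<le> M"
    and phi: "\<And>t. \<bar>t\<bar> \<le> real n \<Longrightarrow> \<phi> t \<in> U \<and> (\<phi> has_vector_derivative \<epsilon> *\<^sub>R A (\<phi> t)) (at t)"
    and b: "b \<in> Basis"
  shows "\<bar>(\<Sum>k=1..n. pcoef n k * ((\<phi> (real k) - \<phi> (- real k)) \<bullet> b)) - \<epsilon> * (A (\<phi> 0) \<bullet> b)\<bar>
    \<le> \<bar>\<epsilon>\<bar>^(2*n+1) * taylor_const DIM('a) n M"
proof -
  define K where "K = (real DIM('a) * 2^(2*n) * M)^(2*n) * M"
  define a where "a m = \<epsilon>^Suc m * (flow_deriv A m (\<phi> 0) \<bullet> b) / fact (Suc m)" for m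
  define P where "P s = \<phi> 0 \<bullet> b + (\<Sum>m<2*n. a m * s^Suc m)" for s
  define R where "R s = \<bar>\<epsilon>\<bar>^(2*n+1) * K * \<bar>s\<bar>^(2*n+1) / fact (2*n+1)" for s
  have taylor: "\<bar>\<phi> s \<bullet> b - P s\<bar> \<le> R s" if "\<bar>s\<bar> \<le> real n" for s
    using flow_taylor_component[OF U A M phi b that] unfolding P_def R_def K_def a_def
    by (simp add: mult_ac)
  have "(\<Sum>k=1..n. pcoef n k * (P (real k) - P (- real k)))
      = (\<Sum>k=1..n. \<Sum>m<2*n. a m * (pcoef n k * (real k ^ Suc m - (- real k) ^ Suc m)))"
    unfolding P_def
    by (intro sum.cong refl) (simp add: sum_distrib_left algebra_simps flip: sum_subtractf del: power_Suc)
  also have "\<dots> = (\<Sum>m<2*n. a m * (\<Sum>k=1..n. pcoef n k * (real k ^ Suc m - (- real k) ^ Suc m)))"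
    by (subst sum.swap) (simp add: sum_distrib_left)
  also have "\<dots> = (\<Sum>m<2*n. if m = 0 then a m else 0)"
    by (intro sum.cong refl) (subst pcoef_moment, auto)
  also have "\<dots> = \<epsilon> * (A (\<phi> 0) \<bullet> b)"
    using n by (simp add: a_def)
  finally have moments: "(\<Sum>k=1..n. pcoef n k * (P (real k) - P (- real k))) = \<epsilon> * (A (\<phi> 0) \<bullet> b)" .
  have "\<bar>(\<Sum>k=1..n. pcoef n k * ((\<phi> (real k) - \<phi> (- real k)) \<bullet> b)) - \<epsilon> * (A (\<phi> 0) \<bullet> b)\<bar>
      = \<bar>\<Sum>k=1..n. pcoef n k * ((\<phi> (real k) \<bullet> b - P (real k)) - (\<phi> (- real k) \<bullet> b - P (- real k)))\<bar>"
    unfolding moments[symmetric] sum_subtractf[symmetric]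
    by (intro arg_cong[where f=abs] sum.cong refl) (simp add: inner_diff_left algebra_simps)
  also have "\<dots> \<le> (\<Sum>k=1..n. \<bar>pcoef n k\<bar> * (R (real k) + R (- real k)))"
  proof (intro order_trans[OF sum_abs] sum_mono)
    fix k assume "k \<in> {1..n}"
    then have "\<bar>(\<phi> (real k) \<bullet> b - P (real k)) - (\<phi> (- real k) \<bullet> b - P (- real k))\<bar>
        \<le> R (real k) + R (- real k)"
      using taylor[of "real k"] taylor[of "- real k"] by (simp add: abs_triangle_ineq4 add_mono)
    then show "\<bar>pcoef n k * ((\<phi> (real k) \<bullet> b - P (real k)) - (\<phi> (- real k) \<bullet> b - P (- real k)))\<bar>
        \<le> \<bar>pcoef n k\<bar> * (R (real k) + R (- real k))"
      by (simp add: abs_mult mult_left_mono)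
  qed
  also have "\<dots> = \<bar>\<epsilon>\<bar>^(2*n+1) * taylor_const DIM('a) n M"
    unfolding R_def K_def taylor_const_def
    by (simp add: sum_distrib_left sum_divide_distrib mult_ac)
  finally show ?thesis .
qed

lemma flow_interpolation_error:
  fixes A :: "'a::euclidean_space \<Rightarrow> 'a" and \<phi> :: "real \<Rightarrow> 'a"
  assumes "open U" "1 \<le> n" "bounded_derivs (2*n) U M A" "0 \<le> M"
    and "\<And>t. \<bar>t\<bar> \<le> real n \<Longrightarrow> \<phi> t \<in> U \<and> (\<phi> has_vector_derivative \<epsilon> *\<^sub>R A (\<phi> t)) (at t)"
  shows "norm (\<epsilon> *\<^sub>R A (\<phi> 0) - (\<Sum>k=1..n. pcoef n k *\<^sub>R (\<phi> (real k) - \<phi> (- real k))))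
    \<le> real DIM('a) * (\<bar>\<epsilon>\<bar>^(2*n+1) * taylor_const DIM('a) n M)"
  (is "norm ?V \<le> _")
proof -
  have "norm ?V \<le> (\<Sum>b\<in>Basis. \<bar>?V \<bullet> b\<bar>)"
    by (rule norm_le_l1)
  also have "\<dots> \<le> (\<Sum>b\<in>(Basis::'a set). \<bar>\<epsilon>\<bar>^(2*n+1) * taylor_const DIM('a) n M)"
  proof (rule sum_mono)
    fix b :: 'a assume b: "b \<in> Basis"
    have "\<bar>?V \<bullet> b\<bar> = \<bar>(\<Sum>k=1..n. pcoef n k * ((\<phi> (real k) - \<phi> (- real k)) \<bullet> b)) - \<epsilon> * (A (\<phi> 0) \<bullet> b)\<bar>"
      by (simp add: inner_diff_left inner_sum_left)
    then show "\<bar>?V \<bullet> b\<bar> \<le> \<bar>\<epsilon>\<bar>^(2*n+1) * taylor_const DIM('a) n M"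
      using flow_interpolation_component[OF assms b] by simp
  qed
  finally show ?thesis by simp
qed

section \<open>Existence of solutions\<close>

lemma norm_diff_le_vector_derivative_bound:
  fixes f :: "real \<Rightarrow> 'b::real_normed_vector"
  assumes "convex S" "\<And>x. x \<in> S \<Longrightarrow> (f has_vector_derivative f' x) (at x within S)"
    "\<And>x. x \<in> S \<Longrightarrow> norm (f' x) \<le> B" "a \<in> S" "b \<in> S"
  shows "norm (f b - f a) \<le> B * \<bar>b - a\<bar>"
proof -
  have "norm (f b - f a) \<le> B * norm (b - a)"
  proof (rule differentiable_bound[OF assms(1), where f'="\<lambda>x h. h *\<^sub>R f' x"])
    show "(f has_derivative (\<lambda>h. h *\<^sub>R f' x)) (at x within S)" if "x \<in> S" for x
      using assms(2)[OF that] by (simp add: has_vector_derivative_def)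
    show "onorm (\<lambda>h. h *\<^sub>R f' x) \<le> B" if "x \<in> S" for x
      using assms(3)[OF that] by (intro onorm_le) (simp add: mult.commute[of B] mult_left_mono)
  qed (use assms in auto)
  then show ?thesis by simp
qed

lemma primitive_bcontfun:
  fixes h :: "real \<Rightarrow> 'a::banach"
  assumes "0 < T" "continuous_on {-T..T} h"
  obtains q :: "real \<Rightarrow>\<^sub>C 'a" where "q 0 = x0" "\<And>t. q t = q (clamp (-T) T t)"
    "\<And>t. t \<in> {-T..T} \<Longrightarrow> (q has_vector_derivative h t) (at t within {-T..T})"
proof -
  define P where "P t = x0 + integral {-T..t} h - integral {-T..0} h" for t
  have P: "(P has_vector_derivative h t) (at t within {-T..T})" if "t \<in> {-T..T}" for t
    unfolding P_def using integral_has_vector_derivative[OF assms(2) that]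
    by (auto intro!: derivative_eq_intros)
  then have Pcont: "continuous_on (cbox (-T) T) P"
    by (metis cbox_interval continuous_on_eq_continuous_within has_vector_derivative_continuous)
  then obtain q :: "real \<Rightarrow>\<^sub>C 'a" where q: "\<And>t. t \<in> cbox (-T) T \<Longrightarrow> q t = P t"
    "\<And>t. q t = P (clamp (-T) T t)"
    using continuous_on_cbox_bcontfunE[OF Pcont] by blast
  have clamp: "clamp (-T) T t \<in> cbox (-T) T" for t
    using clamp_in_interval[of "-T" T t] assms(1) by simp
  show ?thesis
  proof
    show "q 0 = x0" using q(1)[of 0] assms(1) by (simp add: P_def)
    show "q t = q (clamp (-T) T t)" for t using q clamp by metis
    show "(q has_vector_derivative h t) (at t within {-T..T})" if "t \<in> {-T..T}" for t
      using that q(1) P[OF that] by (rule has_vector_derivative_transform) simp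
  qed
qed

lemma clamped_norm_diff_le:
  fixes q :: "real \<Rightarrow> 'a::real_normed_vector"
  assumes "0 < T" "\<And>t. q t = q (clamp (-T) T t)"
    and "\<And>t. t \<in> {-T..T} \<Longrightarrow> (q has_vector_derivative h t) (at t within {-T..T})"
    and "\<And>t. t \<in> {-T..T} \<Longrightarrow> norm (h t) \<le> B"
  shows "norm (q t - q 0) \<le> B * T"
proof -
  have c: "clamp (-T) T t \<in> {-T..T}"
    using clamp_in_interval[of "-T" T t] assms(1) by simp
  have "norm (h 0) \<le> B"
    using assms(1) by (intro assms(4)) auto
  then have B: "0 \<le> B"
    using norm_ge_zero order_trans by blast
  have "norm (q (clamp (-T) T t) - q 0) \<le> B * \<bar>clamp (-T) T t - 0\<bar>"
    using assms(1) c by (intro norm_diff_le_vector_derivative_bound[OF convex_real_interval(5) assms(3,4)]) auto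
  also have "\<dots> \<le> B * T"
    using c B by (intro mult_left_mono) auto
  finally show ?thesis using assms(2)[of t] by simp
qed

text \<open>Picard iteration: the integral operator is a contraction on the bounded continuous
  functions with values in the closed ball, extended constantly outside [-T, T].\<close>

lemma ode_solution_exists:
  fixes f :: "real \<Rightarrow> 'a::banach \<Rightarrow> 'a"
  assumes T: "0 < T" and r: "0 \<le> r"
    and cont: "continuous_on ({-T..T} \<times> cball x0 r) (\<lambda>(t, y). f t y)"
    and bound: "\<And>t y. t \<in> {-T..T} \<Longrightarrow> y \<in> cball x0 r \<Longrightarrow> norm (f t y) \<le> K"
    and lip: "\<And>t y z. t \<in> {-T..T} \<Longrightarrow> y \<in> cball x0 r \<Longrightarrow> z \<in> cball x0 r \<Longrightarrow>
      norm (f t y - f t z) \<le> L * norm (y - z)"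
    and small: "T * K \<le> r" "T * L < 1" "0 \<le> L"
  obtains \<xi> where "\<xi> 0 = x0" "\<And>t. t \<in> {-T..T} \<Longrightarrow> \<xi> t \<in> cball x0 r \<and>
    (\<xi> has_vector_derivative f t (\<xi> t)) (at t within {-T..T})"
proof -
  define S :: "(real \<Rightarrow>\<^sub>C 'a) set" where "S = PiC UNIV (\<lambda>_. cball x0 r)"
  have memS: "g \<in> S \<longleftrightarrow> (\<forall>t. g t \<in> cball x0 r)" for g
    unfolding S_def mem_PiC_iff by auto
  have "const_bcontfun x0 \<in> S"
    unfolding memS using r by (simp add: const_bcontfun.rep_eq)
  then have S: "complete S" "S \<noteq> {}"
    unfolding S_def by (auto intro!: complete_eq_closed[THEN iffD2] closed_PiC)
  have "\<exists>q :: real \<Rightarrow>\<^sub>C 'a. q 0 = x0 \<and> (\<forall>t. q t = q (clamp (-T) T t)) \<and>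
      (\<forall>t\<in>{-T..T}. (q has_vector_derivative f t (g t)) (at t within {-T..T}))" if "g \<in> S" for g
  proof -
    have "continuous_on {-T..T} (\<lambda>s. f s (g s))"
      using that unfolding memS
      by (intro continuous_on_compose2[OF cont, where f="\<lambda>s. (s, g s)", simplified])
        (auto intro!: continuous_intros)
    from primitive_bcontfun[OF T this] show ?thesis by metis
  qed
  then obtain Q :: "(real \<Rightarrow>\<^sub>C 'a) \<Rightarrow> (real \<Rightarrow>\<^sub>C 'a)" where Q0: "\<And>g. g \<in> S \<Longrightarrow> Q g 0 = x0"
    and Qclamp: "\<And>g t. g \<in> S \<Longrightarrow> Q g t = Q g (clamp (-T) T t)"
    and Qder: "\<And>g t. g \<in> S \<Longrightarrow> t \<in> {-T..T} \<Longrightarrow> (Q g has_vector_derivative f t (g t)) (at t within {-T..T})"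
    by metis
  have "Q g \<in> S" if g: "g \<in> S" for g
  proof -
    have "norm (Q g t - x0) \<le> r" for t
      using clamped_norm_diff_le[OF T Qclamp[OF g] Qder[OF g], of K t] bound g small(1)
      by (simp add: Q0[OF g] memS mult.commute)
    then show ?thesis by (simp add: memS dist_norm norm_minus_commute)
  qed
  moreover have "dist (Q g) (Q g') \<le> (T * L) * dist g g'" if g: "g \<in> S" "g' \<in> S" for g g'
  proof (rule dist_bound)
    fix t
    have "norm (f s (g s) - f s (g' s)) \<le> L * dist g g'" if "s \<in> {-T..T}" for s
    proof -
      have "norm (f s (g s) - f s (g' s)) \<le> L * norm (g s - g' s)"
        using lip[OF that] g by (simp add: memS)
      also have "\<dots> \<le> L * dist g g'"
        using dist_bounded[of g s g'] small(3) by (simp add: dist_norm mult_left_mono)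
      finally show ?thesis .
    qed
    then have "norm ((Q g t - Q g' t) - (Q g 0 - Q g' 0)) \<le> L * dist g g' * T"
      using Qclamp[OF g(1)] Qclamp[OF g(2)] Qder[OF g(1)] Qder[OF g(2)]
      by (intro clamped_norm_diff_le[OF T]) (auto intro: has_vector_derivative_diff)
    then show "dist (Q g t) (Q g' t) \<le> (T * L) * dist g g'"
      using Q0[OF g(1)] Q0[OF g(2)] by (simp add: dist_norm mult_ac)
  qed
  ultimately obtain g where g: "g \<in> S" "Q g = g"
    using Banach_fix[OF S _ small(2)] T small by (metis image_subsetI mult_nonneg_nonneg less_imp_le)
  show ?thesis
  proof (rule that)
    show "g 0 = x0"
      using Q0[OF g(1)] g(2) by simp
    show "g t \<in> cball x0 r \<and> (g has_vector_derivative f t (g t)) (at t within {-T..T})"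
      if "t \<in> {-T..T}" for t
      using g(1) Qder[OF g(1) that] unfolding g(2) memS by blast
  qed
qed

section \<open>Suspensions and comparison of flows\<close>

lemma periodic_nat_shift:
  assumes "\<forall>\<tau>. \<forall>x\<in>D. Y (\<tau> + 1) x e = Y \<tau> x e" "x \<in> D"
  shows "Y (\<tau> + real j) x e = Y \<tau> x e" "Y (\<tau> - real j) x e = Y \<tau> x e"
proof -
  show "Y (\<tau> + real j) x e = Y \<tau> x e" for \<tau>
  proof (induction j)
    case (Suc j)
    have "Y (\<tau> + real (Suc j)) x e = Y ((\<tau> + real j) + 1) x e" by (simp add: algebra_simps)
    then show ?case using assms Suc by simp
  qed simp
  show "Y (\<tau> - real j) x e = Y \<tau> x e" for \<tau>
  proof (induction j arbitrary: \<tau>)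
    case (Suc j)
    have "Y (\<tau> - real (Suc j)) x e = Y ((\<tau> - real (Suc j)) + 1) x e" using assms by metis
    then show ?case using Suc by simp
  qed simp
qed

text \<open>The restriction of a solution to a unit interval, shifted to [0, 1], is again a solution
  because Y is periodic; the suspension property then identifies its endpoint.\<close>

lemma suspension_unit_step:
  fixes \<xi> :: "real \<Rightarrow> 'a::euclidean_space"
  assumes susp: "suspension D F Y e"
    and sub: "{a..a+1} \<subseteq> I"
    and sol: "\<And>t. t \<in> I \<Longrightarrow> (\<xi> has_vector_derivative e *\<^sub>R Y t (\<xi> t) e) (at t within I)"
    and inD: "\<And>t. t \<in> {a..a+1} \<Longrightarrow> \<xi> t \<in> D"
    and per: "\<And>s y. y \<in> D \<Longrightarrow> Y (s + a) y e = Y s y e"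
  shows "\<xi> (a + 1) = F e (\<xi> a)"
proof -
  define \<eta> where "\<eta> = (\<lambda>s. \<xi> (s + a))"
  have "\<eta> t \<in> D \<and> (\<eta> has_vector_derivative e *\<^sub>R Y t (\<eta> t) e) (at t within {0..1})"
    if t: "t \<in> {0..1}" for t
  proof
    have ta: "t + a \<in> {a..a+1}" using t by auto
    then show "\<eta> t \<in> D" using inD by (simp add: \<eta>_def)
    have "((\<lambda>s. s + a) has_vector_derivative 1) (at t within {0..1})"
      by (auto intro!: derivative_eq_intros)
    moreover have "(\<lambda>s. s + a) ` {0..1} \<subseteq> I"
      using sub by auto
    then have "(\<xi> has_vector_derivative e *\<^sub>R Y (t + a) (\<xi> (t + a)) e) (at (t + a) within (\<lambda>s. s + a) ` {0..1})"
      using has_vector_derivative_within_subset[OF sol] ta sub by blast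
    ultimately have "((\<xi> \<circ> (\<lambda>s. s + a)) has_vector_derivative 1 *\<^sub>R e *\<^sub>R Y (t + a) (\<xi> (t + a)) e) (at t within {0..1})"
      by (rule vector_diff_chain_within)
    then show "(\<eta> has_vector_derivative e *\<^sub>R Y t (\<eta> t) e) (at t within {0..1})"
      using per[OF inD[OF ta]] by (simp add: \<eta>_def o_def)
  qed
  moreover have "\<eta> 0 = \<xi> a" by (simp add: \<eta>_def)
  ultimately have "\<eta> 1 = F e (\<xi> a)"
    using susp inD[of a] sub unfolding suspension_def by auto
  then show ?thesis by (simp add: \<eta>_def add.commute)
qed

lemma suspension_flow_iterates:
  fixes \<xi> :: "real \<Rightarrow> 'a::euclidean_space"
  assumes susp: "suspension D F Y \<epsilon>" and inj: "inj_on (F \<epsilon>) D" and n: "real n \<le> T"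
    and sol: "\<And>t. t \<in> {-T..T} \<Longrightarrow> \<xi> t \<in> D \<and>
      (\<xi> has_vector_derivative \<epsilon> *\<^sub>R Y t (\<xi> t) \<epsilon>) (at t within {-T..T})"
  shows "\<And>j. j \<le> n \<Longrightarrow> (F \<epsilon> ^^ j) (\<xi> 0) = \<xi> (real j)"
    and "\<And>j. j \<le> n \<Longrightarrow> (Finv D F \<epsilon> ^^ j) (\<xi> 0) = \<xi> (- real j)"
    and "iterates_defined D F n \<epsilon> (\<xi> 0)"
proof -
  have per: "\<forall>\<tau>. \<forall>y\<in>D. Y (\<tau> + 1) y \<epsilon> = Y \<tau> y \<epsilon>"
    using susp unfolding suspension_def by blast
  have fstep: "\<xi> (real j + 1) = F \<epsilon> (\<xi> (real j))" if "j < n" for j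
    using that n sol periodic_nat_shift(1)[where D=D and Y=Y and e=\<epsilon>, OF per]
    by (intro suspension_unit_step[OF susp, where I="{-T..T}"]) (auto simp: add.commute)
  have bstep: "F \<epsilon> (\<xi> (- real (Suc j))) = \<xi> (- real j)" if "j < n" for j
  proof -
    have "Y (s + - real (Suc j)) y \<epsilon> = Y s y \<epsilon>" if "y \<in> D" for s y
      using periodic_nat_shift(2)[where D=D and Y=Y and e=\<epsilon> and j="Suc j", OF per that, of s]
      by (simp only: diff_conv_add_uminus)
    then have "\<xi> (- real (Suc j) + 1) = F \<epsilon> (\<xi> (- real (Suc j)))"
      using that n sol by (intro suspension_unit_step[OF susp, where I="{-T..T}"]) auto
    then show ?thesis by simp
  qed
  show fw: "(F \<epsilon> ^^ j) (\<xi> 0) = \<xi> (real j)" if "j \<le> n" for j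
    using that
  proof (induction j)
    case (Suc j)
    then show ?case using fstep[of j] by (simp add: add.commute)
  qed simp
  show bw: "(Finv D F \<epsilon> ^^ j) (\<xi> 0) = \<xi> (- real j)" if "j \<le> n" for j
    using that
  proof (induction j)
    case (Suc j)
    have inD: "\<xi> (- real (Suc j)) \<in> D" using Suc.prems n sol by auto
    have "(Finv D F \<epsilon> ^^ Suc j) (\<xi> 0) = inv_into D (F \<epsilon>) (F \<epsilon> (\<xi> (- real (Suc j))))"
      using Suc bstep[of j] by (simp add: Finv_def)
    also have "\<dots> = \<xi> (- real (Suc j))"
      using inv_into_f_f[OF inj inD] .
    finally show ?case .
  qed simp
  show "iterates_defined D F n \<epsilon> (\<xi> 0)"
    unfolding iterates_defined_def
  proof (intro allI impI conjI)
    fix k assume k: "k < n"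
    show "(F \<epsilon> ^^ k) (\<xi> 0) \<in> D" using fw[of k] k n sol by auto
    have "\<xi> (- real (Suc k)) \<in> D" using k n sol by auto
    then show "(Finv D F \<epsilon> ^^ k) (\<xi> 0) \<in> F \<epsilon> ` D"
      using bw[of k] bstep[of k] k by (metis image_eqI less_imp_le)
  qed
qed

text \<open>A Gronwall-type estimate, proved through the point where the deviation is maximal.\<close>

lemma flow_comparison:
  fixes \<xi> \<phi> :: "real \<Rightarrow> 'a::real_normed_vector"
  assumes T: "0 \<le> T" and init: "\<xi> 0 = \<phi> 0"
    and xi: "\<And>t. t \<in> {-T..T} \<Longrightarrow> \<xi> t \<in> S \<and> (\<xi> has_vector_derivative f t (\<xi> t)) (at t within {-T..T})"
    and phi: "\<And>t. t \<in> {-T..T} \<Longrightarrow> \<phi> t \<in> S \<and> (\<phi> has_vector_derivative g (\<phi> t)) (at t within {-T..T})"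
    and lip: "\<And>y z. y \<in> S \<Longrightarrow> z \<in> S \<Longrightarrow> norm (g y - g z) \<le> L * norm (y - z)"
    and close: "\<And>t y. t \<in> {-T..T} \<Longrightarrow> y \<in> S \<Longrightarrow> norm (f t y - g y) \<le> \<delta>"
    and L: "0 \<le> L" "T * L \<le> 1/2"
    and t: "t \<in> {-T..T}"
  shows "norm (\<xi> t - \<phi> t) \<le> 2 * T * \<delta>"
proof -
  define e where "e t = \<xi> t - \<phi> t" for t
  have de: "(e has_vector_derivative f t (\<xi> t) - g (\<phi> t)) (at t within {-T..T})" if "t \<in> {-T..T}" for t
    unfolding e_def using xi[OF that] phi[OF that] by (intro has_vector_derivative_diff) auto
  then have "continuous_on {-T..T} (\<lambda>t. norm (e t))"
    by (metis continuous_on_eq_continuous_within continuous_on_norm has_vector_derivative_continuous)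
  then obtain tm where tm: "tm \<in> {-T..T}" "\<And>t. t \<in> {-T..T} \<Longrightarrow> norm (e t) \<le> norm (e tm)"
    using continuous_attains_sup[of "{-T..T}" "\<lambda>t. norm (e t)"] T by auto
  define E where "E = norm (e tm)"
  have bound: "norm (f s (\<xi> s) - g (\<phi> s)) \<le> L * E + \<delta>" if "s \<in> {-T..T}" for s
  proof -
    have "norm (f s (\<xi> s) - g (\<phi> s)) \<le> \<delta> + L * norm (\<xi> s - \<phi> s)"
      using close lip xi[OF that] phi[OF that] that
      by (intro norm_diff_triangle_le[where y="g (\<xi> s)"]) auto
    also have "\<dots> \<le> \<delta> + L * E"
      using tm(2)[OF that] L(1) unfolding E_def e_def by (simp add: mult_left_mono)
    finally show ?thesis by simp
  qed
  have "norm (f 0 (\<xi> 0) - g (\<phi> 0)) \<le> L * E + \<delta>"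
    using T by (intro bound) auto
  then have B0: "0 \<le> L * E + \<delta>"
    using norm_ge_zero order_trans by blast
  have "E = norm (e tm - e 0)"
    using init by (simp add: E_def e_def)
  also have "\<dots> \<le> (L * E + \<delta>) * \<bar>tm - 0\<bar>"
    using T tm(1) by (intro norm_diff_le_vector_derivative_bound[OF convex_real_interval(5) de bound]) auto
  also have "\<dots> \<le> (L * E + \<delta>) * T"
    using tm(1) B0 by (intro mult_left_mono) auto
  finally have "E \<le> (T * L) * E + T * \<delta>"
    by (simp add: algebra_simps)
  also have "\<dots> \<le> E / 2 + T * \<delta>"
    using mult_right_mono[OF L(2) norm_ge_zero[of "e tm"]] by (simp add: E_def)
  finally show ?thesis
    using tm(2)[OF t] unfolding E_def e_def by simp
qed

lemma interpolation_error_split: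
  fixes a :: "'a::real_normed_vector" and \<xi> \<phi> :: "real \<Rightarrow> 'a"
  assumes "\<epsilon> \<noteq> 0"
    and "norm (\<epsilon> *\<^sub>R a - (\<Sum>k=1..n. p k *\<^sub>R (\<phi> (real k) - \<phi> (- real k)))) \<le> E1"
    and "\<And>s. \<bar>s\<bar> \<le> real n \<Longrightarrow> norm (\<xi> s - \<phi> s) \<le> E2"
  shows "norm (a - (1 / \<epsilon>) *\<^sub>R (\<Sum>k=1..n. p k *\<^sub>R (\<xi> (real k) - \<xi> (- real k))))
    \<le> (E1 + 2 * E2 * (\<Sum>k=1..n. \<bar>p k\<bar>)) / \<bar>\<epsilon>\<bar>"
proof -
  define V1 where "V1 = \<epsilon> *\<^sub>R a - (\<Sum>k=1..n. p k *\<^sub>R (\<phi> (real k) - \<phi> (- real k)))"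
  define V2 where "V2 = (\<Sum>k=1..n. p k *\<^sub>R ((\<phi> (real k) - \<xi> (real k)) - (\<phi> (- real k) - \<xi> (- real k))))"
  have "norm V2 \<le> (\<Sum>k=1..n. \<bar>p k\<bar> * (2 * E2))"
    unfolding V2_def
  proof (intro order_trans[OF norm_sum] sum_mono)
    fix k assume "k \<in> {1..n}"
    then have "norm (\<phi> (real k) - \<xi> (real k)) \<le> E2" "norm (\<phi> (- real k) - \<xi> (- real k)) \<le> E2"
      using assms(3) by (auto simp: norm_minus_commute)
    then have "norm ((\<phi> (real k) - \<xi> (real k)) - (\<phi> (- real k) - \<xi> (- real k))) \<le> 2 * E2"
      using norm_triangle_ineq4[of "\<phi> (real k) - \<xi> (real k)" "\<phi> (- real k) - \<xi> (- real k)"] by linarith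
    then show "norm (p k *\<^sub>R ((\<phi> (real k) - \<xi> (real k)) - (\<phi> (- real k) - \<xi> (- real k))))
        \<le> \<bar>p k\<bar> * (2 * E2)"
      by (simp add: mult_left_mono)
  qed
  then have V2: "norm V2 \<le> 2 * E2 * (\<Sum>k=1..n. \<bar>p k\<bar>)"
    by (simp add: sum_distrib_left mult_ac)
  have "(\<Sum>k=1..n. p k *\<^sub>R (\<xi> (real k) - \<xi> (- real k)))
      = (\<Sum>k=1..n. p k *\<^sub>R (\<phi> (real k) - \<phi> (- real k))) - V2"
    unfolding V2_def sum_subtractf[symmetric] by (intro sum.cong refl) (simp add: algebra_simps)
  then have "V1 + V2 = \<epsilon> *\<^sub>R a - (\<Sum>k=1..n. p k *\<^sub>R (\<xi> (real k) - \<xi> (- real k)))"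
    unfolding V1_def by simp
  then have "a - (1 / \<epsilon>) *\<^sub>R (\<Sum>k=1..n. p k *\<^sub>R (\<xi> (real k) - \<xi> (- real k))) = (1 / \<epsilon>) *\<^sub>R (V1 + V2)"
    using assms(1) by (simp add: scaleR_diff_right)
  then have "norm (a - (1 / \<epsilon>) *\<^sub>R (\<Sum>k=1..n. p k *\<^sub>R (\<xi> (real k) - \<xi> (- real k))))
      \<le> (norm V1 + norm V2) / \<bar>\<epsilon>\<bar>"
    by (simp add: divide_right_mono norm_triangle_ineq)
  also have "\<dots> \<le> (E1 + 2 * E2 * (\<Sum>k=1..n. \<bar>p k\<bar>)) / \<bar>\<epsilon>\<bar>"
    using assms(2) V2 unfolding V1_def[symmetric] by (intro divide_right_mono add_mono) auto
  finally show ?thesis .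
qed

lemma split_field_estimates:
  fixes Y B :: "real \<Rightarrow> 'a::euclidean_space \<Rightarrow> real \<Rightarrow> 'a" and A :: "'a \<Rightarrow> real \<Rightarrow> 'a"
  assumes D: "open D" and n: "1 \<le> n" and eps: "\<bar>\<epsilon>\<bar> \<le> 1"
    and split: "\<forall>\<tau>. \<forall>y\<in>D. Y \<tau> y \<epsilon> = A y \<epsilon> + \<epsilon> ^ (2 * n) *\<^sub>R B \<tau> y \<epsilon>"
    and CA: "Ck_bounded (2 * n) D (\<lambda>y. A y \<epsilon>) M"
    and CB: "Ck_bounded (2 * n) (UNIV \<times> D) (\<lambda>(\<tau>, y). B \<tau> y \<epsilon>) M"
    and S: "convex S" "S \<subseteq> D" and y: "y \<in> S" and z: "z \<in> S"
  shows "norm (Y t y \<epsilon> - A y \<epsilon>) \<le> \<bar>\<epsilon>\<bar> ^ (2 * n) * M"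
    and "norm (Y t y \<epsilon>) \<le> 2 * M"
    and "norm (A y \<epsilon> - A z \<epsilon>) \<le> real DIM('a) * M * norm (y - z)"
    and "norm (Y t y \<epsilon> - Y t z \<epsilon>) \<le> (real DIM('a) + real DIM(real \<times> 'a)) * M * norm (y - z)"
proof -
  have yD: "y \<in> D" "z \<in> D" using S y z by auto
  have e2n: "\<bar>\<epsilon>\<bar> ^ (2 * n) \<le> 1" using eps by (simp add: power_le_one)
  show YA: "norm (Y t y \<epsilon> - A y \<epsilon>) \<le> \<bar>\<epsilon>\<bar> ^ (2 * n) * M"
    using split yD(1) Ck_bounded_norm_le[OF CB, of "(t, y)"] yD
    by (simp add: power_abs mult_left_mono)
  have "norm (A y \<epsilon>) \<le> M" using Ck_bounded_norm_le[OF CA yD(1)] by simp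
  moreover from this have "0 \<le> M" using norm_ge_zero order_trans by blast
  ultimately show "norm (Y t y \<epsilon>) \<le> 2 * M"
    using YA mult_right_mono[OF e2n, of M] norm_triangle_ineq2[of "Y t y \<epsilon>" "A y \<epsilon>"] by linarith
  have A: "bounded_derivs (Suc (2 * n - 1)) D M (\<lambda>y. A y \<epsilon>)"
    using bounded_derivs_if_Ck_bounded[OF CA order_refl] n by simp
  show lipA: "norm (A y \<epsilon> - A z \<epsilon>) \<le> real DIM('a) * M * norm (y - z)"
    using bounded_derivs_lipschitz[OF D S A y z] .
  have "norm (B t y \<epsilon> - B t z \<epsilon>) \<le> real DIM(real \<times> 'a) * M * norm (y - z)"
    using Ck_bounded_lipschitz_snd[OF D S _ CB y z, of t] n by simp
  then have lipB: "norm (\<epsilon> ^ (2 * n) *\<^sub>R (B t y \<epsilon> - B t z \<epsilon>)) \<le> real DIM(real \<times> 'a) * M * norm (y - z)"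
    using e2n by (simp add: power_abs) (meson mult_left_le_one_le norm_ge_zero order_trans abs_ge_zero zero_le_power)
  have "Y t y \<epsilon> - Y t z \<epsilon> = (A y \<epsilon> - A z \<epsilon>) + \<epsilon> ^ (2 * n) *\<^sub>R (B t y \<epsilon> - B t z \<epsilon>)"
    using split yD by (simp add: algebra_simps)
  then have "norm (Y t y \<epsilon> - Y t z \<epsilon>) \<le> norm (A y \<epsilon> - A z \<epsilon>) + norm (\<epsilon> ^ (2 * n) *\<^sub>R (B t y \<epsilon> - B t z \<epsilon>))"
    by (simp only: norm_triangle_ineq)
  then show "norm (Y t y \<epsilon> - Y t z \<epsilon>) \<le> (real DIM('a) + real DIM(real \<times> 'a)) * M * norm (y - z)"
    using lipA lipB unfolding distrib_right by linarith
qed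

lemma split_field_continuous_on:
  fixes Y B :: "real \<Rightarrow> 'a::euclidean_space \<Rightarrow> real \<Rightarrow> 'a" and A :: "'a \<Rightarrow> real \<Rightarrow> 'a"
  assumes split: "\<forall>\<tau>. \<forall>y\<in>D. Y \<tau> y \<epsilon> = A y \<epsilon> + \<epsilon> ^ k *\<^sub>R B \<tau> y \<epsilon>"
    and CA: "Ck_bounded m D (\<lambda>y. A y \<epsilon>) M"
    and CB: "Ck_bounded m (UNIV \<times> D) (\<lambda>(\<tau>, y). B \<tau> y \<epsilon>) M"
    and S: "S \<subseteq> D"
  shows "continuous_on (I \<times> S) (\<lambda>(t, y). Y t y \<epsilon>)"
proof (rule continuous_on_eq)
  have "continuous_on (I \<times> S) (\<lambda>p. A (snd p) \<epsilon>)"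
    using S by (intro continuous_on_compose2[OF Ck_bounded_continuous_on[OF CA] continuous_on_snd]) auto
  moreover have "continuous_on (I \<times> S) (\<lambda>(\<tau>, y). B \<tau> y \<epsilon>)"
    using S by (intro continuous_on_subset[OF Ck_bounded_continuous_on[OF CB]]) auto
  ultimately show "continuous_on (I \<times> S) (\<lambda>p. A (snd p) \<epsilon> + \<epsilon> ^ k *\<^sub>R B (fst p) (snd p) \<epsilon>)"
    by (intro continuous_intros) (simp_all add: case_prod_beta)
  show "A (snd p) \<epsilon> + \<epsilon> ^ k *\<^sub>R B (fst p) (snd p) \<epsilon> = (\<lambda>(t, y). Y t y \<epsilon>) p" if "p \<in> I \<times> S" for p
    using that S split by (auto simp: case_prod_beta)
qed

section \<open>The interpolation error\<close>

lemma split_flows_exist: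
  fixes Y B :: "real \<Rightarrow> 'a::euclidean_space \<Rightarrow> real \<Rightarrow> 'a" and A :: "'a \<Rightarrow> real \<Rightarrow> 'a"
  assumes D: "open D" and n: "1 \<le> n" and eps: "\<bar>\<epsilon>\<bar> \<le> 1"
    and Y_split: "\<forall>\<tau>. \<forall>y\<in>D. Y \<tau> y \<epsilon> = A y \<epsilon> + \<epsilon> ^ (2 * n) *\<^sub>R B \<tau> y \<epsilon>"
    and CA: "Ck_bounded (2 * n) D (\<lambda>y. A y \<epsilon>) M"
    and CB: "Ck_bounded (2 * n) (UNIV \<times> D) (\<lambda>(\<tau>, y). B \<tau> y \<epsilon>) M"
    and M: "0 \<le> M" and x: "cball x r \<subseteq> D" and T: "0 < T"
    and small: "T * \<bar>\<epsilon>\<bar> * (2 * M) \<le> r"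
      "T * \<bar>\<epsilon>\<bar> * ((real DIM('a) + real DIM(real \<times> 'a)) * M) \<le> 1 / 2"
  obtains \<xi> \<phi> where "\<xi> 0 = x"
    "\<And>t. t \<in> {-T..T} \<Longrightarrow> \<xi> t \<in> cball x r \<and>
      (\<xi> has_vector_derivative \<epsilon> *\<^sub>R Y t (\<xi> t) \<epsilon>) (at t within {-T..T})"
    "\<phi> 0 = x" "\<And>t. t \<in> {-T..T} \<Longrightarrow> \<phi> t \<in> cball x r \<and>
      (\<phi> has_vector_derivative \<epsilon> *\<^sub>R A (\<phi> t) \<epsilon>) (at t within {-T..T})"
proof -
  define L where "L = (real DIM('a) + real DIM(real \<times> 'a)) * M"
  note est = split_field_estimates[where Y=Y and A=A and B=B and \<epsilon>=\<epsilon>, OF D n eps Y_split CA CB convex_cball x]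
  have "T * (\<bar>\<epsilon>\<bar> * L) \<le> 1 / 2"
    using small(2) unfolding L_def by (simp add: mult_ac)
  then have L: "0 \<le> \<bar>\<epsilon>\<bar> * L" "T * (\<bar>\<epsilon>\<bar> * L) < 1"
    using M unfolding L_def by simp_all
  have K: "T * (\<bar>\<epsilon>\<bar> * (2 * M)) \<le> r"
    using small(1) by (simp add: mult_ac)
  moreover have "0 \<le> T * (\<bar>\<epsilon>\<bar> * (2 * M))"
    using T M by simp
  ultimately have r: "0 \<le> r" by linarith
  obtain \<xi> where \<xi>: "\<xi> 0 = x" "\<And>t. t \<in> {-T..T} \<Longrightarrow> \<xi> t \<in> cball x r \<and>
      (\<xi> has_vector_derivative \<epsilon> *\<^sub>R Y t (\<xi> t) \<epsilon>) (at t within {-T..T})"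
  proof (rule ode_solution_exists[OF T r _ _ _ K L(2,1)])
    show "continuous_on ({-T..T} \<times> cball x r) (\<lambda>(t, y). \<epsilon> *\<^sub>R Y t y \<epsilon>)"
      using continuous_on_scaleR[OF continuous_on_const
          split_field_continuous_on[where Y=Y and A=A and B=B and \<epsilon>=\<epsilon>, OF Y_split CA CB x]]
      by (simp add: case_prod_beta)
    show "norm (\<epsilon> *\<^sub>R Y t y \<epsilon>) \<le> \<bar>\<epsilon>\<bar> * (2 * M)" if "y \<in> cball x r" for t y
      using est(2)[OF that that] by (simp add: mult_left_mono)
    show "norm (\<epsilon> *\<^sub>R Y t y \<epsilon> - \<epsilon> *\<^sub>R Y t z \<epsilon>) \<le> \<bar>\<epsilon>\<bar> * L * norm (y - z)"
      if "y \<in> cball x r" "z \<in> cball x r" for t y z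
      using est(4)[OF that] unfolding L_def
      by (simp add: mult_left_mono mult.assoc flip: scaleR_diff_right)
  qed blast
  obtain \<phi> where \<phi>: "\<phi> 0 = x" "\<And>t. t \<in> {-T..T} \<Longrightarrow> \<phi> t \<in> cball x r \<and>
      (\<phi> has_vector_derivative \<epsilon> *\<^sub>R A (\<phi> t) \<epsilon>) (at t within {-T..T})"
  proof (rule ode_solution_exists[OF T r _ _ _ K L(2,1)])
    show "continuous_on ({-T..T} \<times> cball x r) (\<lambda>(t, y). \<epsilon> *\<^sub>R A y \<epsilon>)"
      using x by (auto intro!: continuous_intros continuous_on_compose2[OF Ck_bounded_continuous_on[OF CA]]
          simp: case_prod_beta)
    show "norm (\<epsilon> *\<^sub>R A y \<epsilon>) \<le> \<bar>\<epsilon>\<bar> * (2 * M)" if "y \<in> cball x r" for y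
      using Ck_bounded_norm_le[OF CA, of y] that x M by (auto intro!: mult_left_mono)
    show "norm (\<epsilon> *\<^sub>R A y \<epsilon> - \<epsilon> *\<^sub>R A z \<epsilon>) \<le> \<bar>\<epsilon>\<bar> * L * norm (y - z)"
      if "y \<in> cball x r" "z \<in> cball x r" for y z
    proof -
      have "real DIM('a) * M \<le> L"
        unfolding L_def using M by (simp add: distrib_right)
      then have "norm (A y \<epsilon> - A z \<epsilon>) \<le> L * norm (y - z)"
        using est(3)[OF that] mult_right_mono[OF _ norm_ge_zero[of "y - z"]] by (meson order_trans)
      then show ?thesis by (simp add: mult_left_mono mult.assoc flip: scaleR_diff_right)
    qed
  qed blast
  from that[OF \<xi> \<phi>] show ?thesis .
qed

lemma interp_field_error_at:
  fixes D :: "'a::euclidean_space set" and F :: "real \<Rightarrow> 'a \<Rightarrow> 'a"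
    and Y B :: "real \<Rightarrow> 'a \<Rightarrow> real \<Rightarrow> 'a" and A :: "'a \<Rightarrow> real \<Rightarrow> 'a"
  assumes D: "open D" and n: "1 \<le> n" and eps: "\<epsilon> \<noteq> 0" "\<bar>\<epsilon>\<bar> \<le> 1"
    and inj: "inj_on (F \<epsilon>) D" and susp: "suspension D F Y \<epsilon>"
    and Y_split: "\<forall>\<tau>. \<forall>y\<in>D. Y \<tau> y \<epsilon> = A y \<epsilon> + \<epsilon> ^ (2 * n) *\<^sub>R B \<tau> y \<epsilon>"
    and CA: "Ck_bounded (2 * n) D (\<lambda>y. A y \<epsilon>) M"
    and CB: "Ck_bounded (2 * n) (UNIV \<times> D) (\<lambda>(\<tau>, y). B \<tau> y \<epsilon>) M"
    and M: "0 \<le> M" and x: "cball x r \<subseteq> D"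
    and small: "(real n + 1) * \<bar>\<epsilon>\<bar> * (2 * M) \<le> r"
      "(real n + 1) * \<bar>\<epsilon>\<bar> * ((real DIM('a) + real DIM(real \<times> 'a)) * M) \<le> 1 / 2"
  shows "iterates_defined D F n \<epsilon> x \<and> norm (A x \<epsilon> - interp_field D F n \<epsilon> x)
    \<le> (real DIM('a) * taylor_const DIM('a) n M + 4 * (real n + 1) * M * (\<Sum>k=1..n. \<bar>pcoef n k\<bar>))
       * \<epsilon> ^ (2 * n)"
proof -
  define T where "T = real n + 1"
  have T: "0 < T" "real n \<le> T" unfolding T_def by auto
  obtain \<xi> \<phi> where \<xi>: "\<xi> 0 = x" "\<And>t. t \<in> {-T..T} \<Longrightarrow> \<xi> t \<in> cball x r \<and>
      (\<xi> has_vector_derivative \<epsilon> *\<^sub>R Y t (\<xi> t) \<epsilon>) (at t within {-T..T})"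
    and \<phi>: "\<phi> 0 = x" "\<And>t. t \<in> {-T..T} \<Longrightarrow> \<phi> t \<in> cball x r \<and>
      (\<phi> has_vector_derivative \<epsilon> *\<^sub>R A (\<phi> t) \<epsilon>) (at t within {-T..T})"
    by (rule split_flows_exist[where Y=Y and A=A and B=B and \<epsilon>=\<epsilon>, OF D n eps(2) Y_split CA CB M x T(1)
          small[folded T_def]]) blast
  have "\<xi> t \<in> D \<and> (\<xi> has_vector_derivative \<epsilon> *\<^sub>R Y t (\<xi> t) \<epsilon>) (at t within {-T..T})"
    if "t \<in> {-T..T}" for t
    using \<xi>(2)[OF that] x by blast
  note iterates = suspension_flow_iterates[OF susp inj T(2) this, unfolded \<xi>(1)]
  note est = split_field_estimates[where Y=Y and A=A and B=B and \<epsilon>=\<epsilon>, OF D n eps(2) Y_split CA CB convex_cball x]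
  define L where "L = \<bar>\<epsilon>\<bar> * (real DIM('a) * M)"
  have "T * L \<le> T * \<bar>\<epsilon>\<bar> * ((real DIM('a) + real DIM(real \<times> 'a)) * M)"
    unfolding L_def using T M by (simp add: mult.assoc mult_left_mono mult_right_mono)
  then have L: "0 \<le> L" "T * L \<le> 1 / 2"
    using small(2)[folded T_def] M unfolding L_def by simp_all
  have close: "norm (\<xi> s - \<phi> s) \<le> 2 * T * (\<bar>\<epsilon>\<bar> ^ (2 * n + 1) * M)" if "\<bar>s\<bar> \<le> real n" for s
  proof (rule flow_comparison[where f="\<lambda>t y. \<epsilon> *\<^sub>R Y t y \<epsilon>" and g="\<lambda>y. \<epsilon> *\<^sub>R A y \<epsilon>",
        OF _ _ \<xi>(2) \<phi>(2) _ _ L])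
    show "norm (\<epsilon> *\<^sub>R A y \<epsilon> - \<epsilon> *\<^sub>R A z \<epsilon>) \<le> L * norm (y - z)"
      if "y \<in> cball x r" "z \<in> cball x r" for y z
      using est(3)[OF that] unfolding L_def
      by (simp add: mult_left_mono mult.assoc flip: scaleR_diff_right)
    show "norm (\<epsilon> *\<^sub>R Y t y \<epsilon> - \<epsilon> *\<^sub>R A y \<epsilon>) \<le> \<bar>\<epsilon>\<bar> ^ (2 * n + 1) * M"
      if "y \<in> cball x r" for t y
      using est(1)[OF that that, of t] by (simp add: mult_left_mono mult.assoc flip: scaleR_diff_right)
  qed (use that T \<phi>(1) \<xi>(1) in auto)
  have phi_at: "\<phi> t \<in> D \<and> (\<phi> has_vector_derivative \<epsilon> *\<^sub>R A (\<phi> t) \<epsilon>) (at t)" if "\<bar>t\<bar> \<le> real n" for t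
  proof -
    have t: "t \<in> {-T..T}" "t \<in> {-T<..<T}" using that unfolding T_def by auto
    have "(\<phi> has_vector_derivative \<epsilon> *\<^sub>R A (\<phi> t) \<epsilon>) (at t within {-T<..<T})"
      by (rule has_vector_derivative_within_subset[OF conjunct2[OF \<phi>(2)[OF t(1)]]]) auto
    then show ?thesis
      using \<phi>(2)[OF t(1)] x at_within_open[OF t(2)] by auto
  qed
  have "norm (\<epsilon> *\<^sub>R A x \<epsilon> - (\<Sum>k=1..n. pcoef n k *\<^sub>R (\<phi> (real k) - \<phi> (- real k))))
      \<le> real DIM('a) * (\<bar>\<epsilon>\<bar>^(2*n+1) * taylor_const DIM('a) n M)"
    using flow_interpolation_error[OF D n bounded_derivs_if_Ck_bounded[OF CA order_refl] M phi_at]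
    by (simp add: \<phi>(1))
  moreover have "interp_field D F n \<epsilon> x = (1 / \<epsilon>) *\<^sub>R (\<Sum>k=1..n. pcoef n k *\<^sub>R (\<xi> (real k) - \<xi> (- real k)))"
    unfolding interp_field_def using iterates(1,2) by (intro arg_cong[where f="scaleR _"] sum.cong) auto
  ultimately have "norm (A x \<epsilon> - interp_field D F n \<epsilon> x)
      \<le> (real DIM('a) * (\<bar>\<epsilon>\<bar>^(2*n+1) * taylor_const DIM('a) n M)
         + 2 * (2 * T * (\<bar>\<epsilon>\<bar> ^ (2 * n + 1) * M)) * (\<Sum>k=1..n. \<bar>pcoef n k\<bar>)) / \<bar>\<epsilon>\<bar>"
    using interpolation_error_split[OF eps(1) _ close] by simp
  also have "\<dots> = (real DIM('a) * taylor_const DIM('a) n M + 4 * T * M * (\<Sum>k=1..n. \<bar>pcoef n k\<bar>))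
      * \<epsilon> ^ (2 * n)"
    using eps(1) by (simp add: field_simps power_even_abs)
  finally show ?thesis
    using iterates(3) unfolding T_def by simp
qed

lemma interp_field_error_uniform:
  fixes D D0 :: "'a::euclidean_space set" and F :: "real \<Rightarrow> 'a \<Rightarrow> 'a"
    and Y B :: "real \<Rightarrow> 'a \<Rightarrow> real \<Rightarrow> 'a" and A :: "'a \<Rightarrow> real \<Rightarrow> 'a"
  assumes D: "open D" and n: "1 \<le> n" and eps0: "\<epsilon>0 > 0"
    and inj: "\<forall>\<epsilon>. \<bar>\<epsilon>\<bar> < \<epsilon>0 \<longrightarrow> inj_on (F \<epsilon>) D"
    and susp: "\<forall>\<epsilon>. \<bar>\<epsilon>\<bar> < \<epsilon>0 \<longrightarrow> suspension D F Y \<epsilon>"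
    and split: "\<forall>\<epsilon> \<tau>. \<forall>x\<in>D. \<bar>\<epsilon>\<bar> < \<epsilon>0 \<longrightarrow> Y \<tau> x \<epsilon> = A x \<epsilon> + \<epsilon> ^ (2 * n) *\<^sub>R B \<tau> x \<epsilon>"
    and bounds: "\<And>\<epsilon>. \<bar>\<epsilon>\<bar> < \<epsilon>0 \<Longrightarrow> Ck_bounded (2 * n) D (\<lambda>x. A x \<epsilon>) M \<and>
      Ck_bounded (2 * n) (UNIV \<times> D) (\<lambda>(\<tau>, x). B \<tau> x \<epsilon>) M"
    and M: "0 \<le> M" and D0: "compact D0" "D0 \<subseteq> D"
  shows "\<exists>\<epsilon>1>0. \<exists>C. \<forall>\<epsilon>. 0 < \<bar>\<epsilon>\<bar> \<and> \<bar>\<epsilon>\<bar> < \<epsilon>1 \<longrightarrow>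
           (\<forall>x\<in>D0. iterates_defined D F n \<epsilon> x \<and>
                    norm (A x \<epsilon> - interp_field D F n \<epsilon> x) \<le> C * \<epsilon> ^ (2 * n))"
proof -
  obtain r where r: "r > 0" "(\<Union>x\<in>D0. cball x r) \<subseteq> D"
    using compact_subset_open_imp_cball_epsilon_subset[OF D0(1) D D0(2)] .
  define L where "L = (real DIM('a) + real DIM(real \<times> 'a)) * M"
  define Q where "Q = (real n + 1) * (2 * M + L + 1)"
  have L: "0 \<le> L" unfolding L_def using M by simp
  then have Q: "0 < Q" unfolding Q_def using M by (intro mult_pos_pos) auto
  define \<epsilon>1 where "\<epsilon>1 = min \<epsilon>0 (min 1 (min r (1 / 2) / Q))"
  have "0 < \<epsilon>1" unfolding \<epsilon>1_def using eps0 r Q by simp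
  moreover have "iterates_defined D F n \<epsilon> x \<and> norm (A x \<epsilon> - interp_field D F n \<epsilon> x)
      \<le> (real DIM('a) * taylor_const DIM('a) n M + 4 * (real n + 1) * M * (\<Sum>k=1..n. \<bar>pcoef n k\<bar>))
         * \<epsilon> ^ (2 * n)"
    if \<epsilon>: "0 < \<bar>\<epsilon>\<bar>" "\<bar>\<epsilon>\<bar> < \<epsilon>1" and x: "x \<in> D0" for \<epsilon> x
  proof (rule interp_field_error_at[OF D n _ _ _ _ _ _ _ M])
    have e: "\<bar>\<epsilon>\<bar> < \<epsilon>0" "\<bar>\<epsilon>\<bar> \<le> 1" "\<bar>\<epsilon>\<bar> < min r (1 / 2) / Q"
      using \<epsilon>(2) unfolding \<epsilon>1_def by simp_all
    show "\<epsilon> \<noteq> 0" "\<bar>\<epsilon>\<bar> \<le> 1" using \<epsilon>(1) e(2) by auto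
    show "inj_on (F \<epsilon>) D" using inj e(1) by blast
    show "suspension D F Y \<epsilon>" using susp e(1) by blast
    show "\<forall>\<tau>. \<forall>y\<in>D. Y \<tau> y \<epsilon> = A y \<epsilon> + \<epsilon> ^ (2 * n) *\<^sub>R B \<tau> y \<epsilon>" using split e(1) by blast
    show "Ck_bounded (2 * n) D (\<lambda>y. A y \<epsilon>) M" "Ck_bounded (2 * n) (UNIV \<times> D) (\<lambda>(\<tau>, y). B \<tau> y \<epsilon>) M"
      using bounds[OF e(1)] by auto
    show "cball x r \<subseteq> D" using r x by blast
    have small: "(real n + 1) * \<bar>\<epsilon>\<bar> * (2 * M + L + 1) \<le> min r (1 / 2)"
      using e(3) Q by (simp add: pos_less_divide_eq Q_def mult_ac)
    have "(real n + 1) * \<bar>\<epsilon>\<bar> * (2 * M) \<le> (real n + 1) * \<bar>\<epsilon>\<bar> * (2 * M + L + 1)"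
      "(real n + 1) * \<bar>\<epsilon>\<bar> * L \<le> (real n + 1) * \<bar>\<epsilon>\<bar> * (2 * M + L + 1)"
      using M L by (intro mult_left_mono; simp)+
    then show "(real n + 1) * \<bar>\<epsilon>\<bar> * (2 * M) \<le> r"
      "(real n + 1) * \<bar>\<epsilon>\<bar> * ((real DIM('a) + real DIM(real \<times> 'a)) * M) \<le> 1 / 2"
      using small unfolding L_def by linarith+
  qed
  ultimately show ?thesis by blast
qed

theorem mainTheorem7:
  fixes D D0 :: "'a::euclidean_space set"
    and F :: "real \<Rightarrow> 'a \<Rightarrow> 'a"
    and Y B :: "real \<Rightarrow> 'a \<Rightarrow> real \<Rightarrow> 'a"
    and A :: "'a \<Rightarrow> real \<Rightarrow> 'a"
    and n :: nat and \<epsilon>0 :: real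
  assumes domain: "open D" "connected D" "D \<noteq> {}"
    and eps0: "\<epsilon>0 > 0"
    and smooth: "smooth_on (D \<times> {-\<epsilon>0<..<\<epsilon>0}) (\<lambda>(x, \<epsilon>). F \<epsilon> x)"
    and near_id: "\<forall>x\<in>D. F 0 x = x"
    and invertible: "\<forall>\<epsilon>. \<bar>\<epsilon>\<bar> < \<epsilon>0 \<longrightarrow> inj_on (F \<epsilon>) D"
    and susp: "\<forall>\<epsilon>. \<bar>\<epsilon>\<bar> < \<epsilon>0 \<longrightarrow> suspension D F Y \<epsilon>"
    and split: "\<forall>\<epsilon> \<tau>. \<forall>x\<in>D. \<bar>\<epsilon>\<bar> < \<epsilon>0 \<longrightarrow> Y \<tau> x \<epsilon> = A x \<epsilon> + \<epsilon> ^ (2 * n) *\<^sub>R B \<tau> x \<epsilon>"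
    and bounds: "\<exists>M. \<forall>\<epsilon>. \<bar>\<epsilon>\<bar> < \<epsilon>0 \<longrightarrow>
                   Ck_bounded (2 * n) D (\<lambda>x. A x \<epsilon>) M \<and>
                   Ck_bounded (2 * n) (UNIV \<times> D) (\<lambda>(\<tau>, x). B \<tau> x \<epsilon>) M"
    and D0: "compact D0" "D0 \<subseteq> D"
  shows "\<exists>\<epsilon>1>0. \<exists>C. \<forall>\<epsilon>. 0 < \<bar>\<epsilon>\<bar> \<and> \<bar>\<epsilon>\<bar> < \<epsilon>1 \<longrightarrow>
           (\<forall>x\<in>D0. iterates_defined D F n \<epsilon> x \<and>
                    norm (A x \<epsilon> - interp_field D F n \<epsilon> x) \<le> C * \<epsilon> ^ (2 * n))"
proof -
  obtain M where M: "\<And>\<epsilon>. \<bar>\<epsilon>\<bar> < \<epsilon>0 \<Longrightarrow> Ck_bounded (2 * n) D (\<lambda>x. A x \<epsilon>) M \<and>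
      Ck_bounded (2 * n) (UNIV \<times> D) (\<lambda>(\<tau>, x). B \<tau> x \<epsilon>) M"
    using bounds by blast
  have A_bound: "norm (A x \<epsilon>) \<le> M" if "x \<in> D" "\<bar>\<epsilon>\<bar> < \<epsilon>0" for x \<epsilon>
    using Ck_bounded_norm_le[OF conjunct1[OF M[OF that(2)]] that(1)] .
  obtain y where "y \<in> D" using domain(3) by blast
  then have "norm (A y 0) \<le> M" using A_bound eps0 by simp
  then have "0 \<le> M" using norm_ge_zero order_trans by blast
  show ?thesis
  proof (cases "n = 0")
    case True
    then have "iterates_defined D F n \<epsilon> x \<and> norm (A x \<epsilon> - interp_field D F n \<epsilon> x) \<le> M * \<epsilon> ^ (2 * n)"
      if "\<bar>\<epsilon>\<bar> < \<epsilon>0" "x \<in> D0" for \<epsilon> x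
      using A_bound[of x \<epsilon>] that D0(2) by (auto simp: iterates_defined_def interp_field_def)
    then show ?thesis using eps0 by blast
  next
    case False
    then show ?thesis
      using interp_field_error_uniform[OF domain(1) _ eps0 invertible susp split M \<open>0 \<le> M\<close> D0] by simp
  qed
qed

end
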